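(* Let $L>0$ be fixed. For every $k\in(0,1)$, the function $\varphi_k$ defined below is an even, smooth, $L$-periodic solution of $-\varphi''+\omega\varphi-\varphi^{5}=0$ with $\omega=\omega(k)$. The parameters satisfy $a(k)\in\left(\tfrac{2\sqrt{\pi}}{\sqrt{L}},+\infty\right)$ and $q(k)\in(-2,-1)$, and they depend smoothly on $k\in(0,1)$. The map $k\mapsto\omega(k)$ is a smooth, strictly increasing bijection of $(0,1)$ onto $\mathcal{I}:=\left(\tfrac{4\pi^2}{L^2},+\infty\right)$. Consequently, $\omega\in\mathcal{I}\mapsto\varphi_\omega\in H^2_{per,e}([0,L])$ is a smooth curve of periodic solutions.
   Context: For $k\in(0,1)$, let ${\rm K}(k)$ denote the complete elliptic integral of the first kind, and let ${\rm sn},{\rm cn}$ be the Jacobi elliptic functions. Set $s(k)=\sqrt{k^4-k^2+1}$ and $$q(k)=k^2-1-s(k),\qquad b(k)=\frac{4{\rm K}(k)}{L},$$ $$a(k)=\frac{2\big({\rm K}(k)^2(k^2-1-s(k))(-k^2-1-s(k))L^2\big)^{1/4}}{L},$$ $$\omega(k)=\frac{-16\,{\rm K}(k)^2\big((1-k^2)s(k)+k^4-k^2+1\big)}{(k^2-1-s(k))L^2}.$$ Define $$\varphi_k(x)=\frac{a(k)\,{\rm cn}(b(k)x,k)}{\sqrt{1-q(k)\,{\rm sn}^2(b(k)x,k)}},$$ and $\varphi_\omega:=\varphi_{k}$ with $\omega(k)=\omega$. $H^2_{per,e}$ is the subspace of even functions in $H^2_{per}([0,L])$. *)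

theory Defs
  imports "HOL-Analysis.Analysis"
begin

definition ellF :: "real \<Rightarrow> real \<Rightarrow> real" where
  "ellF \<phi> k = (if 0 \<le> \<phi>
      then integral {0..\<phi>} (\<lambda>\<theta>. 1 / sqrt (1 - k\<^sup>2 * (sin \<theta>)\<^sup>2))
      else - integral {\<phi>..0} (\<lambda>\<theta>. 1 / sqrt (1 - k\<^sup>2 * (sin \<theta>)\<^sup>2)))"

definition ellK :: "real \<Rightarrow> real" where
  "ellK k = integral {0..pi/2} (\<lambda>\<theta>. 1 / sqrt (1 - k\<^sup>2 * (sin \<theta>)\<^sup>2))"

definition jam :: "real \<Rightarrow> real \<Rightarrow> real" where
  "jam u k = (THE \<phi>. ellF \<phi> k = u)"

definition jsn :: "real \<Rightarrow> real \<Rightarrow> real" where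
  "jsn u k = sin (jam u k)"

definition jcn :: "real \<Rightarrow> real \<Rightarrow> real" where
  "jcn u k = cos (jam u k)"

definition s_par :: "real \<Rightarrow> real" where
  "s_par k = sqrt (k^4 - k\<^sup>2 + 1)"

definition q_par :: "real \<Rightarrow> real" where
  "q_par k = k\<^sup>2 - 1 - s_par k"

definition b_par :: "real \<Rightarrow> real \<Rightarrow> real" where
  "b_par L k = 4 * ellK k / L"

definition a_par :: "real \<Rightarrow> real \<Rightarrow> real" where
  "a_par L k = 2 * root 4 ((ellK k)\<^sup>2 * (k\<^sup>2 - 1 - s_par k) * (- k\<^sup>2 - 1 - s_par k) * L\<^sup>2) / L"

definition omega_par :: "real \<Rightarrow> real \<Rightarrow> real" where
  "omega_par L k = - 16 * (ellK k)\<^sup>2 * ((1 - k\<^sup>2) * s_par k + k^4 - k\<^sup>2 + 1)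
                    / ((k\<^sup>2 - 1 - s_par k) * L\<^sup>2)"

definition phi_k :: "real \<Rightarrow> real \<Rightarrow> real \<Rightarrow> real" where
  "phi_k L k x = a_par L k * jcn (b_par L k * x) k
                 / sqrt (1 - q_par k * (jsn (b_par L k * x) k)\<^sup>2)"

definition k_of_omega :: "real \<Rightarrow> real \<Rightarrow> real" where
  "k_of_omega L w = (THE k. k \<in> {0<..<1} \<and> omega_par L k = w)"

definition phi_omega :: "real \<Rightarrow> real \<Rightarrow> real \<Rightarrow> real" where
  "phi_omega L w x = phi_k L (k_of_omega L w) x"

text \<open>C^n on a set S (intended for open S): f is n times differentiable with
  continuous n-th derivatives; derivatives expressed via all directional derivatives.\<close>
fun Cn_on :: "nat \<Rightarrow> 'a::real_normed_vector set \<Rightarrow> ('a \<Rightarrow> 'b::real_normed_vector) \<Rightarrow> bool" where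
  "Cn_on 0 S f = continuous_on S f"
| "Cn_on (Suc n) S f = (\<exists>D. (\<forall>x\<in>S. (f has_derivative D x) (at x)) \<and>
                          (\<forall>v. Cn_on n S (\<lambda>x. D x v)))"

definition smooth_on :: "'a::real_normed_vector set \<Rightarrow> ('a \<Rightarrow> 'b::real_normed_vector) \<Rightarrow> bool" where
  "smooth_on S f = (\<forall>n. Cn_on n S f)"

end

theory Submission
  imports Defs
begin

(* The amplitude jam u k is the inverse of the incomplete integral F(., k); since F is smooth
   in (phi, k) with derivative 1/sqrt(1 - k^2 sin^2 phi) in phi, a parametric inverse function
   theorem makes jam, hence sn, cn, dn and phi_k, jointly smooth, and yields
   sn' = cn dn, cn' = - sn dn, dn' = - k^2 sn cn.  Differentiating the profile
   a cn / sqrt(1 - q sn^2) twice, the equation -phi'' + omega phi - phi^5 = 0 reduces to a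
   polynomial identity in sn^2 whose three coefficients vanish for the given a, b, q, omega.
   Evenness and L-periodicity come from F(-phi) = -F(phi) and F(phi + pi) = F(phi) + 2K.
   Finally omega(k) = 16 K(k)^2 s(k) / L^2 and a(k)^4 = 16 K(k)^2 (2 + 2 s(k) - k^2) / L^2, and the
   bound K'(k) >= k K(k) / 2 makes both strictly increasing; as K(0) = pi/2 and K is unbounded
   near 1, omega maps (0,1) onto (4 pi^2/L^2, oo), and its inverse is smooth. *)

section \<open>Smooth functions\<close>

lemma Cn_on_SucI:
  "(\<And>x. x \<in> S \<Longrightarrow> (f has_derivative D x) (at x)) \<Longrightarrow> (\<And>v. Cn_on n S (\<lambda>x. D x v))
    \<Longrightarrow> Cn_on (Suc n) S f"
  by (simp only: Cn_on.simps) blast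

lemma Cn_on_SucE:
  assumes "Cn_on (Suc n) S f"
  obtains D where "\<And>x. x \<in> S \<Longrightarrow> (f has_derivative D x) (at x)" "\<And>v. Cn_on n S (\<lambda>x. D x v)"
  using assms by (simp only: Cn_on.simps) blast

declare Cn_on.simps(2)[simp del]

lemma smooth_onD: "smooth_on S f \<Longrightarrow> Cn_on n S f"
  by (simp add: smooth_on_def)

lemma smooth_onI: "(\<And>n. Cn_on n S f) \<Longrightarrow> smooth_on S f"
  by (simp add: smooth_on_def)

lemma Cn_on_imp_continuous_on: "Cn_on n S f \<Longrightarrow> continuous_on S f"
proof (cases n)
  case (Suc m)
  assume "Cn_on n S f"
  then obtain D where "\<And>x. x \<in> S \<Longrightarrow> (f has_derivative D x) (at x)"
    using Suc Cn_on_SucE by metis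
  then show ?thesis
    by (meson continuous_at_imp_continuous_on has_derivative_continuous)
qed simp

lemma Cn_on_Suc_imp_Cn_on: "Cn_on (Suc n) S f \<Longrightarrow> Cn_on n S f"
proof (induction n arbitrary: f)
  case 0
  then show ?case using Cn_on_imp_continuous_on by simp
next
  case (Suc n)
  obtain D where D: "\<And>x. x \<in> S \<Longrightarrow> (f has_derivative D x) (at x)"
    "\<And>v. Cn_on (Suc n) S (\<lambda>x. D x v)"
    by (rule Cn_on_SucE[OF Suc.prems]) blast
  show ?case by (rule Cn_on_SucI[OF D(1) Suc.IH[OF D(2)]])
qed

lemma Cn_on_subset: "Cn_on n S f \<Longrightarrow> T \<subseteq> S \<Longrightarrow> Cn_on n T f"
proof (induction n arbitrary: f)
  case 0
  then show ?case using continuous_on_subset by auto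
next
  case (Suc n)
  obtain D where D: "\<And>x. x \<in> S \<Longrightarrow> (f has_derivative D x) (at x)" "\<And>v. Cn_on n S (\<lambda>x. D x v)"
    by (rule Cn_on_SucE[OF Suc.prems(1)]) blast
  show ?case by (rule Cn_on_SucI[of T f D]) (use D Suc in auto)
qed

lemma smooth_on_subset: "smooth_on S f \<Longrightarrow> T \<subseteq> S \<Longrightarrow> smooth_on T f"
  by (meson Cn_on_subset smooth_on_def)

lemma Cn_on_cong:
  assumes "open S" "\<And>x. x \<in> S \<Longrightarrow> f x = g x" "Cn_on n S f"
  shows "Cn_on n S g"
  using assms(2,3)
proof (induction n arbitrary: f g)
  case 0
  then show ?case using continuous_on_cong by auto
next
  case (Suc n)
  obtain D where D: "\<And>x. x \<in> S \<Longrightarrow> (f has_derivative D x) (at x)" "\<And>v. Cn_on n S (\<lambda>x. D x v)"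
    by (rule Cn_on_SucE[OF Suc.prems(2)]) blast
  have "(g has_derivative D x) (at x)" if "x \<in> S" for x
    using D(1)[OF that] Suc.prems(1) assms(1) that
    by (metis has_derivative_transform_within_open)
  then show ?case using D(2) by (rule Cn_on_SucI)
qed

lemma Cn_on_const: "Cn_on n S (\<lambda>x. c)"
proof (induction n arbitrary: c)
  case (Suc n)
  show ?case by (rule Cn_on_SucI[where D="\<lambda>x v. 0"]) (auto intro: derivative_eq_intros Suc)
qed simp

lemma Cn_on_bounded_linear: "bounded_linear f \<Longrightarrow> Cn_on n S f"
proof (cases n)
  case 0
  assume "bounded_linear f"
  then show ?thesis using 0 by (simp add: linear_continuous_on)
next
  case (Suc m)
  assume f: "bounded_linear f"
  show ?thesis unfolding Suc
    by (rule Cn_on_SucI[where D="\<lambda>x. f"])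
      (auto intro: f bounded_linear_imp_has_derivative Cn_on_const)
qed

lemma Cn_on_id: "Cn_on n S (\<lambda>x. x)"
  by (rule Cn_on_bounded_linear) (rule bounded_linear_ident)

lemma Cn_on_fst: "Cn_on n S fst"
  by (rule Cn_on_bounded_linear[OF bounded_linear_fst])

lemma Cn_on_snd: "Cn_on n S snd"
  by (rule Cn_on_bounded_linear[OF bounded_linear_snd])

lemma Cn_on_add:
  "Cn_on n S f \<Longrightarrow> Cn_on n S g \<Longrightarrow> Cn_on n S (\<lambda>x. f x + g x)"
proof (induction n arbitrary: f g)
  case 0
  then show ?case by (simp add: continuous_on_add)
next
  case (Suc n)
  obtain D where D: "\<And>x. x \<in> S \<Longrightarrow> (f has_derivative D x) (at x)" "\<And>v. Cn_on n S (\<lambda>x. D x v)"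
    by (rule Cn_on_SucE[OF Suc.prems(1)]) blast
  obtain E where E: "\<And>x. x \<in> S \<Longrightarrow> (g has_derivative E x) (at x)" "\<And>v. Cn_on n S (\<lambda>x. E x v)"
    by (rule Cn_on_SucE[OF Suc.prems(2)]) blast
  show ?case
  proof (rule Cn_on_SucI[where D="\<lambda>x v. D x v + E x v"])
    show "((\<lambda>x. f x + g x) has_derivative (\<lambda>v. D x v + E x v)) (at x)" if "x \<in> S" for x
      using D(1)[OF that] E(1)[OF that] by (rule has_derivative_add)
    show "Cn_on n S (\<lambda>x. D x v + E x v)" for v
      by (rule Suc.IH[OF D(2) E(2)])
  qed
qed

lemma Cn_on_bounded_linear_compose:
  assumes "bounded_linear L" "Cn_on n S f"
  shows "Cn_on n S (\<lambda>x. L (f x))"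
  using assms(2)
proof (induction n arbitrary: f)
  case 0
  then show ?case
    using continuous_on_compose[OF _ linear_continuous_on[OF assms(1)]] by (simp add: o_def)
next
  case (Suc n)
  obtain D where D: "\<And>x. x \<in> S \<Longrightarrow> (f has_derivative D x) (at x)" "\<And>v. Cn_on n S (\<lambda>x. D x v)"
    by (rule Cn_on_SucE[OF Suc.prems(1)]) blast
  show ?case
  proof (rule Cn_on_SucI[where D="\<lambda>x v. L (D x v)"])
    show "((\<lambda>x. L (f x)) has_derivative (\<lambda>v. L (D x v))) (at x)" if "x \<in> S" for x
      using bounded_linear.has_derivative[OF assms(1) D(1)[OF that]] .
    show "Cn_on n S (\<lambda>x. L (D x v))" for v
      by (rule Suc.IH[OF D(2)])
  qed
qed

lemma Cn_on_uminus: "Cn_on n S f \<Longrightarrow> Cn_on n S (\<lambda>x. - f x)"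
  by (drule Cn_on_bounded_linear_compose[OF bounded_linear_minus[OF bounded_linear_ident]]) simp

lemma Cn_on_diff: "Cn_on n S f \<Longrightarrow> Cn_on n S g \<Longrightarrow> Cn_on n S (\<lambda>x. f x - g x)"
  using Cn_on_add[OF _ Cn_on_uminus] by simp

lemma Cn_on_mult:
  fixes f g :: "'a::real_normed_vector \<Rightarrow> real"
  shows "Cn_on n S f \<Longrightarrow> Cn_on n S g \<Longrightarrow> Cn_on n S (\<lambda>x. f x * g x)"
proof (induction n arbitrary: f g)
  case 0
  then show ?case by (simp add: continuous_on_mult)
next
  case (Suc n)
  obtain D where D: "\<And>x. x \<in> S \<Longrightarrow> (f has_derivative D x) (at x)" "\<And>v. Cn_on n S (\<lambda>x. D x v)"
    by (rule Cn_on_SucE[OF Suc.prems(1)]) blast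
  obtain E where E: "\<And>x. x \<in> S \<Longrightarrow> (g has_derivative E x) (at x)" "\<And>v. Cn_on n S (\<lambda>x. E x v)"
    by (rule Cn_on_SucE[OF Suc.prems(2)]) blast
  have f: "Cn_on n S f" and g: "Cn_on n S g"
    using Suc.prems Cn_on_Suc_imp_Cn_on by blast+
  show ?case
  proof (rule Cn_on_SucI[where D="\<lambda>x v. f x * E x v + D x v * g x"])
    show "((\<lambda>x. f x * g x) has_derivative (\<lambda>v. f x * E x v + D x v * g x)) (at x)" if "x \<in> S" for x
      using D(1)[OF that] E(1)[OF that] by (auto intro: derivative_eq_intros)
    show "Cn_on n S (\<lambda>x. f x * E x v + D x v * g x)" for v
      by (rule Cn_on_add[OF Suc.IH[OF f E(2)] Suc.IH[OF D(2) g]])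
  qed
qed

lemma Cn_on_power:
  fixes f :: "'a::real_normed_vector \<Rightarrow> real"
  shows "Cn_on n S f \<Longrightarrow> Cn_on n S (\<lambda>x. f x ^ m)"
  by (induction m) (simp_all add: Cn_on_const Cn_on_mult)

lemma Cn_on_sum:
  "finite I \<Longrightarrow> (\<And>i. i \<in> I \<Longrightarrow> Cn_on n S (f i)) \<Longrightarrow> Cn_on n S (\<lambda>x. \<Sum>i\<in>I. f i x)"
  by (induction I rule: finite_induct) (simp_all add: Cn_on_const Cn_on_add)

lemma Cn_on_Pair:
  "Cn_on n S f \<Longrightarrow> Cn_on n S g \<Longrightarrow> Cn_on n S (\<lambda>x. (f x, g x))"
proof (induction n arbitrary: f g)
  case 0
  then show ?case by (simp add: continuous_on_Pair)
next
  case (Suc n)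
  obtain D where D: "\<And>x. x \<in> S \<Longrightarrow> (f has_derivative D x) (at x)" "\<And>v. Cn_on n S (\<lambda>x. D x v)"
    by (rule Cn_on_SucE[OF Suc.prems(1)]) blast
  obtain E where E: "\<And>x. x \<in> S \<Longrightarrow> (g has_derivative E x) (at x)" "\<And>v. Cn_on n S (\<lambda>x. E x v)"
    by (rule Cn_on_SucE[OF Suc.prems(2)]) blast
  show ?case
  proof (rule Cn_on_SucI[where D="\<lambda>x v. (D x v, E x v)"])
    show "((\<lambda>x. (f x, g x)) has_derivative (\<lambda>v. (D x v, E x v))) (at x)" if "x \<in> S" for x
      using D(1)[OF that] E(1)[OF that] by (rule has_derivative_Pair)
    show "Cn_on n S (\<lambda>x. (D x v, E x v))" for v
      by (rule Suc.IH[OF D(2) E(2)])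
  qed
qed

text \<open>In the chain rule the inner derivative is expanded in a basis, so that the
  outer derivative is only ever evaluated at fixed vectors, where the induction hypothesis applies.\<close>

lemma Cn_on_compose:
  fixes f :: "'b::euclidean_space \<Rightarrow> real" and g :: "'a::real_normed_vector \<Rightarrow> 'b"
  assumes "open S" "Cn_on n T f" "Cn_on n S g" "\<And>x. x \<in> S \<Longrightarrow> g x \<in> T"
  shows "Cn_on n S (\<lambda>x. f (g x))"
  using assms(2-)
proof (induction n arbitrary: f g)
  case 0
  then show ?case by (auto intro: continuous_on_compose2)
next
  case (Suc n)
  obtain D where D: "\<And>y. y \<in> T \<Longrightarrow> (f has_derivative D y) (at y)" "\<And>v. Cn_on n T (\<lambda>y. D y v)"
    by (rule Cn_on_SucE[OF Suc.prems(1)]) blast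
  obtain E where E: "\<And>x. x \<in> S \<Longrightarrow> (g has_derivative E x) (at x)" "\<And>v. Cn_on n S (\<lambda>x. E x v)"
    by (rule Cn_on_SucE[OF Suc.prems(2)]) blast
  show ?case
  proof (rule Cn_on_SucI[where D="\<lambda>x v. D (g x) (E x v)"])
    show "((\<lambda>x. f (g x)) has_derivative (\<lambda>v. D (g x) (E x v))) (at x)" if "x \<in> S" for x
      using diff_chain_at[OF E(1)[OF that] D(1)[OF Suc.prems(3)[OF that]]] by (simp add: o_def)
  next
    fix v
    have expand: "D (g x) (E x v) = (\<Sum>i\<in>Basis. (E x v \<bullet> i) * D (g x) i)" if "x \<in> S" for x
      using Linear_Algebra.linear_componentwise[OF has_derivative_linear[OF D(1)[OF Suc.prems(3)[OF that]]],
          of "E x v" 1]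
      by (simp only: inner_real_def mult_1_right)
    have "Cn_on n S (\<lambda>x. \<Sum>i\<in>Basis. (E x v \<bullet> i) * D (g x) i)"
    proof (intro Cn_on_sum Cn_on_mult)
      show "Cn_on n S (\<lambda>x. E x v \<bullet> i)" for i
        using Cn_on_bounded_linear_compose[OF bounded_linear_inner_left E(2)] .
      show "Cn_on n S (\<lambda>x. D (g x) i)" for i
        using Suc.IH[OF D(2) Cn_on_Suc_imp_Cn_on[OF Suc.prems(2)] Suc.prems(3)] .
    qed simp
    from Cn_on_cong[OF assms(1) _ this] expand show "Cn_on n S (\<lambda>x. D (g x) (E x v))"
      by simp
  qed
qed

lemma Cn_on_SucI_real:
  fixes f :: "real \<Rightarrow> real"
  assumes "\<And>x. x \<in> S \<Longrightarrow> (f has_real_derivative f' x) (at x)" "Cn_on n S f'"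
  shows "Cn_on (Suc n) S f"
proof (rule Cn_on_SucI[where D="\<lambda>x v. f' x * v"])
  show "(f has_derivative (\<lambda>v. f' x * v)) (at x)" if "x \<in> S" for x
    using assms(1)[OF that] by (simp add: has_field_derivative_def)
  show "Cn_on n S (\<lambda>x. f' x * v)" for v
    by (rule Cn_on_mult[OF assms(2) Cn_on_const])
qed

lemma Cn_on_inverse_nonzero: "Cn_on n (- {0}) (inverse :: real \<Rightarrow> real)"
proof (induction n)
  case 0
  then show ?case by (simp add: continuous_on_inverse continuous_on_id)
next
  case (Suc n)
  show ?case
  proof (rule Cn_on_SucI_real[where f'="\<lambda>x. - (inverse x * inverse x)"])
    show "(inverse has_real_derivative - (inverse x * inverse x)) (at x)" if "x \<in> - {0}" for x
      using that by (auto intro!: derivative_eq_intros simp: power2_eq_square)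
    show "Cn_on n (- {0}) (\<lambda>x::real. - (inverse x * inverse x))"
      by (intro Cn_on_uminus Cn_on_mult Suc.IH)
  qed
qed

lemma Cn_on_inverse:
  fixes g :: "'a::real_normed_vector \<Rightarrow> real"
  assumes "open S" "Cn_on n S g" "\<And>x. x \<in> S \<Longrightarrow> g x \<noteq> 0"
  shows "Cn_on n S (\<lambda>x. inverse (g x))"
  by (rule Cn_on_compose[OF assms(1) Cn_on_inverse_nonzero assms(2)]) (use assms(3) in auto)

lemma Cn_on_divide:
  fixes f g :: "'a::real_normed_vector \<Rightarrow> real"
  assumes "open S" "Cn_on n S f" "Cn_on n S g" "\<And>x. x \<in> S \<Longrightarrow> g x \<noteq> 0"
  shows "Cn_on n S (\<lambda>x. f x / g x)"
  using Cn_on_mult[OF assms(2) Cn_on_inverse[OF assms(1,3,4)]] by (simp add: divide_inverse)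

lemma Cn_on_sqrt_pos: "Cn_on n {0<..} sqrt"
proof (induction n)
  case 0
  then show ?case by (simp add: continuous_on_real_sqrt continuous_on_id)
next
  case (Suc n)
  show ?case
  proof (rule Cn_on_SucI_real[where f'="\<lambda>x. inverse (sqrt x) / 2"])
    show "(sqrt has_real_derivative inverse (sqrt x) / 2) (at x)" if "x \<in> {0<..}" for x
      using that by (intro DERIV_real_sqrt) simp
    show "Cn_on n {0<..} (\<lambda>x. inverse (sqrt x) / 2)"
      by (intro Cn_on_divide Cn_on_inverse Suc.IH Cn_on_const) auto
  qed
qed

lemma Cn_on_sqrt:
  fixes g :: "'a::real_normed_vector \<Rightarrow> real"
  assumes "open S" "Cn_on n S g" "\<And>x. x \<in> S \<Longrightarrow> g x > 0"
  shows "Cn_on n S (\<lambda>x. sqrt (g x))"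
  by (rule Cn_on_compose[OF assms(1) Cn_on_sqrt_pos assms(2)]) (use assms(3) in auto)

lemma Cn_on_sin_cos: "Cn_on n UNIV (sin :: real \<Rightarrow> real) \<and> Cn_on n UNIV (cos :: real \<Rightarrow> real)"
proof (induction n)
  case 0
  then show ?case by (auto intro!: continuous_at_imp_continuous_on continuous_intros)
next
  case (Suc n)
  then show ?case
    using Cn_on_SucI_real[where f'=cos, OF DERIV_sin]
      Cn_on_SucI_real[where f'="\<lambda>x. - sin x", OF DERIV_cos Cn_on_uminus] by blast
qed

lemma Cn_on_sin:
  fixes g :: "'a::real_normed_vector \<Rightarrow> real"
  shows "open S \<Longrightarrow> Cn_on n S g \<Longrightarrow> Cn_on n S (\<lambda>x. sin (g x))"
  using Cn_on_compose[OF _ Cn_on_sin_cos[THEN conjunct1]] by blast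

lemma Cn_on_cos:
  fixes g :: "'a::real_normed_vector \<Rightarrow> real"
  shows "open S \<Longrightarrow> Cn_on n S g \<Longrightarrow> Cn_on n S (\<lambda>x. cos (g x))"
  using Cn_on_compose[OF _ Cn_on_sin_cos[THEN conjunct2]] by blast

lemma smooth_on_derivative:
  assumes "open S" "smooth_on S f"
  obtains D where "\<And>x. x \<in> S \<Longrightarrow> (f has_derivative D x) (at x)" "\<And>v. smooth_on S (\<lambda>x. D x v)"
proof -
  obtain D where D: "\<And>x. x \<in> S \<Longrightarrow> (f has_derivative D x) (at x)"
    by (rule Cn_on_SucE[OF smooth_onD[OF assms(2), of "Suc 0"]]) blast
  have "Cn_on n S (\<lambda>x. D x v)" for v n
  proof -
    obtain E where E: "\<And>x. x \<in> S \<Longrightarrow> (f has_derivative E x) (at x)" "\<And>v. Cn_on n S (\<lambda>x. E x v)"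
      by (rule Cn_on_SucE[OF smooth_onD[OF assms(2), of "Suc n"]]) blast
    have "E x v = D x v" if "x \<in> S" for x
      using has_derivative_unique[OF E(1)[OF that] D(1)[OF that]] by simp
    then show ?thesis by (rule Cn_on_cong[OF assms(1) _ E(2)])
  qed
  then show ?thesis using D that smooth_onI by blast
qed

section \<open>Partial derivatives, parametric integrals and inverse functions\<close>

lemma has_derivative_partial_fst:
  assumes "(H has_derivative D) (at (x, t))"
  shows "((\<lambda>x. H (x, t)) has_derivative (\<lambda>v. D (v, 0))) (at x)"
proof -
  have "((\<lambda>x. (x, t)) has_derivative (\<lambda>v. (v, 0))) (at x)"
    by (auto intro!: derivative_eq_intros)
  from diff_chain_at[OF this assms] show ?thesis
    by (simp add: o_def)
qed

lemma has_derivative_real_pair_apply: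
  fixes F :: "real \<times> real \<Rightarrow> real"
  assumes D: "(F has_derivative D) (at z)"
    and Ft: "((\<lambda>t. F (t, snd z)) has_real_derivative Ft) (at (fst z))"
  shows "D v = fst v * Ft + snd v * D (0, 1)"
proof -
  have "((\<lambda>t. F (t, snd z)) has_derivative (\<lambda>v. D (v, 0))) (at (fst z))"
    using has_derivative_partial_fst[of F D "fst z" "snd z"] D by simp
  from has_derivative_unique[OF this Ft[unfolded has_field_derivative_def]]
  have "D (1, 0) = Ft"
    by (metis mult.right_neutral)
  moreover have "v = fst v *\<^sub>R (1, 0) + snd v *\<^sub>R (0, 1)"
    by simp
  then have "D v = fst v * D (1, 0) + snd v * D (0, 1)"
    using linear_add[OF has_derivative_linear[OF D]] linear_scale[OF has_derivative_linear[OF D]]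
    by (metis real_scaleR_def)
  ultimately show ?thesis
    by simp
qed

lemma has_derivative_parametric_integral:
  fixes H :: "'a::euclidean_space \<times> real \<Rightarrow> real"
  assumes U: "open U" "convex U" "p \<in> U"
    and H: "\<And>z. z \<in> U \<times> UNIV \<Longrightarrow> (H has_derivative D z) (at z)"
    and D: "\<And>v. continuous_on (U \<times> UNIV) (\<lambda>z. D z v)"
  shows "((\<lambda>p. integral {a..b} (\<lambda>t. H (p, t))) has_derivative
           (\<lambda>v. integral {a..b} (\<lambda>t. D (p, t) (v, 0)))) (at p)"
proof -
  define Dx where "Dx p t = Blinfun (\<lambda>v. D (p, t) (v, 0))" for p t
  have Dx_apply: "blinfun_apply (Dx p t) = (\<lambda>v. D (p, t) (v, 0))" if "p \<in> U" for p t
    using has_derivative_bounded_linear[OF has_derivative_partial_fst[OF H[of "(p, t)"]]] that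
    by (simp add: Dx_def bounded_linear_Blinfun_apply)
  have cont_Dx: "continuous_on (U \<times> cbox a b) (\<lambda>(x, t). Dx x t)"
  proof (rule continuous_on_blinfun_componentwise)
    fix i :: 'a
    have "continuous_on (U \<times> cbox a b) (\<lambda>z. D z (i, 0))"
      using D by (rule continuous_on_subset) auto
    then show "continuous_on (U \<times> cbox a b) (\<lambda>z. blinfun_apply (case z of (x, t) \<Rightarrow> Dx x t) i)"
      by (rule continuous_on_cong[THEN iffD1, rotated 2]) (auto simp: Dx_apply)
  qed
  have cont_H: "continuous_on (U \<times> UNIV) H"
    using H by (meson continuous_at_imp_continuous_on has_derivative_continuous)
  have "(\<lambda>t. H (x, t)) integrable_on cbox a b" if "x \<in> U" for x
    by (rule integrable_continuous, rule continuous_on_compose2[OF cont_H])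
      (auto intro!: continuous_intros simp: that)
  from leibniz_rule[OF _ this cont_Dx U(3,2)]
  have "((\<lambda>x. integral (cbox a b) (\<lambda>t. H (x, t))) has_derivative integral (cbox a b) (Dx p)) (at p)"
    using has_derivative_partial_fst[OF H] at_within_open[OF U(3,1)]
    by (simp add: Dx_apply has_derivative_at_withinI)
  moreover have "(Dx p) integrable_on cbox a b"
    by (rule integrable_continuous, rule continuous_on_compose2[OF cont_Dx, where f="\<lambda>t. (p, t)", simplified])
      (auto intro!: continuous_intros simp: U(3))
  then have "blinfun_apply (integral (cbox a b) (Dx p)) = (\<lambda>v. integral {a..b} (\<lambda>t. D (p, t) (v, 0)))"
    by (simp add: blinfun_apply_integral Dx_apply[OF U(3)] fun_eq_iff)
  ultimately show ?thesis by simp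
qed

lemma Cn_on_parametric_integral:
  fixes H :: "'a::euclidean_space \<times> real \<Rightarrow> real"
  assumes "open U" "convex U"
  shows "Cn_on n (U \<times> UNIV) H \<Longrightarrow> Cn_on n U (\<lambda>p. integral {a..b} (\<lambda>t. H (p, t)))"
proof (induction n arbitrary: H)
  case 0
  then have "continuous_on (U \<times> cbox a b) (\<lambda>(x, t). H (x, t))"
    by (auto intro: continuous_on_subset)
  from integral_continuous_on_param[OF this] show ?case by simp
next
  case (Suc n)
  obtain D where D: "\<And>z. z \<in> U \<times> UNIV \<Longrightarrow> (H has_derivative D z) (at z)"
    "\<And>v. Cn_on n (U \<times> UNIV) (\<lambda>z. D z v)"
    by (rule Cn_on_SucE[OF Suc.prems]) blast
  show ?case
  proof (rule Cn_on_SucI)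
    show "((\<lambda>p. integral {a..b} (\<lambda>t. H (p, t))) has_derivative
            (\<lambda>v. integral {a..b} (\<lambda>t. D (p, t) (v, 0)))) (at p)" if "p \<in> U" for p
      using has_derivative_parametric_integral[OF assms that D(1)] D(2) Cn_on_imp_continuous_on
      by blast
    show "Cn_on n U (\<lambda>p. integral {a..b} (\<lambda>t. D (p, t) (v, 0)))" for v
      by (rule Suc.IH[OF D(2)])
  qed
qed

text \<open>The inverse function theorem for the triangular map \<open>(t, k) \<mapsto> (F (t, k), k)\<close>, whose
  inverse is \<open>(u, k) \<mapsto> (J (u, k), k)\<close>.\<close>

lemma has_derivative_partial_inverse:
  fixes F J :: "real \<times> real \<Rightarrow> real"
  assumes S: "open S" "(J w, snd w) \<in> S" and F: "continuous_on S F"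
    and DF: "(F has_derivative (\<lambda>v. fst v * Ft + snd v * Fk)) (at (J w, snd w))" "Ft \<noteq> 0"
    and JF: "\<And>z. z \<in> S \<Longrightarrow> J (F z, snd z) = fst z" and FJ: "F (J w, snd w) = fst w"
  shows "(J has_derivative (\<lambda>v. (fst v - Fk * snd v) / Ft)) (at w)"
proof -
  let ?G = "\<lambda>z. (F z, snd z)" and ?H = "\<lambda>w. (J w, snd w)"
  have "(?H has_derivative (\<lambda>v. ((fst v - Fk * snd v) / Ft, snd v))) (at (?G (?H w)))"
  proof (rule has_derivative_inverse_strong[OF S])
    show "continuous_on S ?G"
      using F by (intro continuous_intros)
    show "?H (?G z) = z" if "z \<in> S" for z
      using JF[OF that] by simp
    show "(?G has_derivative (\<lambda>v. (fst v * Ft + snd v * Fk, snd v))) (at (?H w))"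
      by (intro has_derivative_Pair DF(1) has_derivative_snd has_derivative_ident)
    show "(\<lambda>v. (fst v * Ft + snd v * Fk, snd v)) \<circ> (\<lambda>v. ((fst v - Fk * snd v) / Ft, snd v)) = id"
      using DF(2) by (simp add: fun_eq_iff field_simps)
  qed
  then have "(?H has_derivative (\<lambda>v. ((fst v - Fk * snd v) / Ft, snd v))) (at w)"
    using FJ by simp
  from has_derivative_fst[OF this] show ?thesis
    by simp
qed

lemma smooth_on_real_pair_derivative:
  fixes F dF :: "real \<times> real \<Rightarrow> real"
  assumes S: "open S" and F: "smooth_on S F"
    and dF: "\<And>z. z \<in> S \<Longrightarrow> ((\<lambda>t. F (t, snd z)) has_real_derivative dF z) (at (fst z))"
  obtains Dk where "\<And>z. z \<in> S \<Longrightarrow> (F has_derivative (\<lambda>v. fst v * dF z + snd v * Dk z)) (at z)"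
    "smooth_on S dF" "smooth_on S Dk"
proof -
  obtain D where D: "\<And>z. z \<in> S \<Longrightarrow> (F has_derivative D z) (at z)" "\<And>v. smooth_on S (\<lambda>z. D z v)"
    by (rule smooth_on_derivative[OF S F]) blast
  define Dk where "Dk z = D z (0, 1)" for z
  have D_apply: "D z = (\<lambda>v. fst v * dF z + snd v * Dk z)" if "z \<in> S" for z
    unfolding Dk_def by (rule ext) (rule has_derivative_real_pair_apply[OF D(1)[OF that] dF[OF that]])
  have "smooth_on S dF"
  proof (rule smooth_onI)
    show "Cn_on n S dF" for n
      by (rule Cn_on_cong[OF S _ smooth_onD[OF D(2)], of "(1, 0)"]) (simp add: D_apply)
  qed
  moreover have "smooth_on S Dk"
    unfolding Dk_def[abs_def] by (rule D(2))
  ultimately show ?thesis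
    using that D(1) D_apply by metis
qed

lemma smooth_on_partial_inverse:
  fixes F J dF :: "real \<times> real \<Rightarrow> real"
  assumes S: "open S" and T: "open T" and F: "smooth_on S F"
    and dF: "\<And>z. z \<in> S \<Longrightarrow> ((\<lambda>t. F (t, snd z)) has_real_derivative dF z) (at (fst z))"
      "\<And>z. z \<in> S \<Longrightarrow> dF z \<noteq> 0"
    and JF: "\<And>z. z \<in> S \<Longrightarrow> J (F z, snd z) = fst z"
    and FJ: "\<And>w. w \<in> T \<Longrightarrow> (J w, snd w) \<in> S" "\<And>w. w \<in> T \<Longrightarrow> F (J w, snd w) = fst w"
  shows "smooth_on T J"
proof -
  obtain Dk where D: "\<And>z. z \<in> S \<Longrightarrow> (F has_derivative (\<lambda>v. fst v * dF z + snd v * Dk z)) (at z)"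
    and dF_smooth: "smooth_on S dF" and Dk_smooth: "smooth_on S Dk"
    using smooth_on_real_pair_derivative[OF S F dF(1)] by metis
  define H where "H w = (J w, snd w)" for w
  have J': "(J has_derivative (\<lambda>v. (fst v - Dk (H w) * snd v) / dF (H w))) (at w)" if "w \<in> T" for w
  proof -
    have z: "(J w, snd w) \<in> S"
      by (rule FJ(1)[OF that])
    show ?thesis
      unfolding H_def
      by (rule has_derivative_partial_inverse[OF S z Cn_on_imp_continuous_on[OF smooth_onD[OF F]]
            D[OF z] dF(2)[OF z] JF FJ(2)[OF that]])
  qed
  have "Cn_on n T J" for n
  proof (induction n)
    case 0
    show ?case
      by (auto intro!: continuous_at_imp_continuous_on has_derivative_continuous J')
  next
    case (Suc n)
    have H: "Cn_on n T H"
      unfolding H_def by (rule Cn_on_Pair[OF Suc.IH Cn_on_snd])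
    have HS: "\<And>w. w \<in> T \<Longrightarrow> H w \<in> S"
      unfolding H_def by (rule FJ(1))
    show ?case
    proof (rule Cn_on_SucI[OF J'])
      have DkH: "Cn_on n T (\<lambda>w. Dk (H w))"
        by (rule Cn_on_compose[OF T smooth_onD[OF Dk_smooth] H HS])
      have dFH: "Cn_on n T (\<lambda>w. dF (H w))"
        by (rule Cn_on_compose[OF T smooth_onD[OF dF_smooth] H HS])
      show "Cn_on n T (\<lambda>w. (fst v - Dk (H w) * snd v) / dF (H w))" for v
        by (rule Cn_on_divide[OF T Cn_on_diff[OF Cn_on_const Cn_on_mult[OF DkH Cn_on_const]] dFH])
          (simp add: HS dF(2))
    qed
  qed
  then show ?thesis by (rule smooth_onI)
qed

lemma smooth_on_inverse_function:
  fixes f g :: "real \<Rightarrow> real"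
  assumes S: "open S" and T: "open T" and f: "smooth_on S f"
    and f': "\<And>x. x \<in> S \<Longrightarrow> (f has_real_derivative f' x) (at x)" "\<And>x. x \<in> S \<Longrightarrow> f' x \<noteq> 0"
    and gf: "\<And>x. x \<in> S \<Longrightarrow> g (f x) = x"
    and fg: "\<And>y. y \<in> T \<Longrightarrow> g y \<in> S" "\<And>y. y \<in> T \<Longrightarrow> f (g y) = y"
  shows "smooth_on T g"
proof -
  have "smooth_on (T \<times> (UNIV :: real set)) (\<lambda>w. g (fst w))"
  proof (rule smooth_on_partial_inverse[where F="\<lambda>z. f (fst z)" and dF="\<lambda>z. f' (fst z)"])
    show "smooth_on (S \<times> UNIV) (\<lambda>z. f (fst z))"
    proof (rule smooth_onI)
      show "Cn_on n (S \<times> UNIV) (\<lambda>z. f (fst z))" for n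
        by (rule Cn_on_compose[OF _ smooth_onD[OF f] Cn_on_fst]) (auto intro: open_Times S)
    qed
  qed (use assms in \<open>auto intro: open_Times\<close>)
  then show ?thesis
    using Cn_on_compose[OF T _ Cn_on_Pair[OF Cn_on_id Cn_on_const], of _ "T \<times> UNIV" "\<lambda>w. g (fst w)" 0]
    by (auto intro!: smooth_onI dest: smooth_onD)
qed

section \<open>Elliptic integrals and Jacobi elliptic functions\<close>

definition ell_integrand :: "real \<Rightarrow> real \<Rightarrow> real" where
  "ell_integrand k \<theta> = 1 / sqrt (1 - k\<^sup>2 * (sin \<theta>)\<^sup>2)"

lemma ellF_eq_integral: "ellF \<phi> k =
    (if 0 \<le> \<phi> then integral {0..\<phi>} (ell_integrand k) else - integral {\<phi>..0} (ell_integrand k))"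
  by (simp add: ellF_def ell_integrand_def[abs_def])

lemma ellK_eq_integral: "ellK k = integral {0..pi/2} (ell_integrand k)"
  by (simp add: ellK_def ell_integrand_def[abs_def])

lemma ellF_0 [simp]: "ellF 0 k = 0"
  by (simp add: ellF_def)

lemma ellF_pi_half: "ellF (pi/2) k = ellK k"
  by (simp add: ellF_def ellK_def)

lemma ell_radicand_pos:
  fixes k :: real
  assumes "\<bar>k\<bar> < 1"
  shows "0 < 1 - k\<^sup>2 * (sin \<theta>)\<^sup>2"
proof -
  have "k\<^sup>2 * (sin \<theta>)\<^sup>2 \<le> k\<^sup>2"
    by (simp add: mult_left_le abs_square_le_1)
  moreover have "k\<^sup>2 < 1"
    using assms by (simp add: abs_square_less_1)
  ultimately show ?thesis by simp
qed

lemma ell_integrand_ge_1: "\<bar>k\<bar> < 1 \<Longrightarrow> 1 \<le> ell_integrand k \<theta>"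
  using ell_radicand_pos[of k \<theta>] by (simp add: ell_integrand_def)

lemma ell_integrand_pos: "\<bar>k\<bar> < 1 \<Longrightarrow> 0 < ell_integrand k \<theta>"
  using ell_integrand_ge_1[of k \<theta>] by simp

lemma ell_integrand_minus: "ell_integrand k (- \<theta>) = ell_integrand k \<theta>"
  by (simp add: ell_integrand_def)

lemma ell_integrand_add_pi: "ell_integrand k (\<theta> + pi) = ell_integrand k \<theta>"
  by (simp add: ell_integrand_def)

lemma ell_integrand_reflect: "ell_integrand k (pi/2 + \<theta>) = ell_integrand k (pi/2 - \<theta>)"
  by (simp add: ell_integrand_def sin_add sin_diff)

lemma continuous_on_ell_integrand:
  assumes "\<bar>k\<bar> < 1"
  shows "continuous_on S (ell_integrand k)"
proof -
  have "k\<^sup>2 * (sin \<theta>)\<^sup>2 \<noteq> 1" for \<theta>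
    using ell_radicand_pos[OF assms, of \<theta>] by linarith
  then show ?thesis
    unfolding ell_integrand_def[abs_def] by (intro continuous_intros) auto
qed

lemma integrable_ell_integrand: "\<bar>k\<bar> < 1 \<Longrightarrow> ell_integrand k integrable_on {a..b}"
  by (rule integrable_continuous_interval[OF continuous_on_ell_integrand])

lemma smooth_on_ell_integrand:
  "smooth_on (UNIV \<times> {-1<..<1}) (\<lambda>z. ell_integrand (snd z) (fst z))"
proof (rule smooth_onI)
  fix n
  have S: "open (UNIV \<times> {-1<..<1} :: (real \<times> real) set)"
    by (intro open_Times) auto
  have pos: "0 < 1 - (snd z)\<^sup>2 * (sin (fst z))\<^sup>2" if "z \<in> UNIV \<times> {-1<..<1}" for z :: "real \<times> real"
    using that by (intro ell_radicand_pos) auto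
  have "Cn_on n (UNIV \<times> {-1<..<1}) (\<lambda>z :: real \<times> real. 1 - (snd z)\<^sup>2 * (sin (fst z))\<^sup>2)"
    by (rule Cn_on_diff[OF Cn_on_const Cn_on_mult[OF Cn_on_power[OF Cn_on_snd]
          Cn_on_power[OF Cn_on_sin[OF S Cn_on_fst]]]])
  then have "Cn_on n (UNIV \<times> {-1<..<1}) (\<lambda>z. 1 / sqrt (1 - (snd z)\<^sup>2 * (sin (fst z))\<^sup>2))"
  proof (rule Cn_on_divide[OF S Cn_on_const Cn_on_sqrt[OF S _ pos]])
    show "sqrt (1 - (snd z)\<^sup>2 * (sin (fst z))\<^sup>2) \<noteq> 0" if "z \<in> UNIV \<times> {-1<..<1}" for z
      using pos[OF that] by simp
  qed
  then show "Cn_on n (UNIV \<times> {-1<..<1}) (\<lambda>z. ell_integrand (snd z) (fst z))"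
    by (simp add: ell_integrand_def)
qed

lemma has_real_derivative_ellF:
  assumes k: "\<bar>k\<bar> < 1"
  shows "((\<lambda>\<phi>. ellF \<phi> k) has_real_derivative ell_integrand k \<phi>) (at \<phi>)"
proof -
  define M where "M = \<bar>\<phi>\<bar> + 1"
  have M: "- M < \<phi>" "\<phi> < M" "- M < 0"
    by (auto simp: M_def)
  have ellF_eq: "ellF x k = integral {-M..x} (ell_integrand k) - integral {-M..0} (ell_integrand k)"
    if "x \<in> {-M<..<M}" for x
    using that Henstock_Kurzweil_Integration.integral_combine[OF _ _ integrable_ell_integrand[OF k],
        of "-M" 0 x] Henstock_Kurzweil_Integration.integral_combine[OF _ _ integrable_ell_integrand[OF k],
        of "-M" x 0] M(3)
    by (auto simp: ellF_eq_integral)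
  have "((\<lambda>x. integral {-M..x} (ell_integrand k)) has_real_derivative ell_integrand k \<phi>)
          (at \<phi> within {-M<..<M})"
    by (rule has_field_derivative_subset[OF integral_has_real_derivative[where a="-M" and b=M,
          OF continuous_on_ell_integrand[OF k]]]) (use M in auto)
  then have "((\<lambda>x. integral {-M..x} (ell_integrand k) - integral {-M..0} (ell_integrand k))
               has_real_derivative ell_integrand k \<phi>) (at \<phi>)"
    using at_within_open[of \<phi> "{-M<..<M}"] M by (auto intro!: derivative_eq_intros)
  then show ?thesis
    by (rule has_field_derivative_transform_within_open[of _ _ _ "{-M<..<M}"]) (use M ellF_eq in auto)
qed

lemma has_real_derivative_ellF_compose [derivative_intros]:
  "\<bar>k\<bar> < 1 \<Longrightarrow> (g has_real_derivative g') (at x within S)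
    \<Longrightarrow> ((\<lambda>x. ellF (g x) k) has_real_derivative ell_integrand k (g x) * g') (at x within S)"
  by (rule DERIV_chain2[OF has_real_derivative_ellF])

text \<open>Each symmetry of the integrand gives an identity for \<open>ellF\<close>: the two sides have the same
  derivative and agree at one point.\<close>

lemma ellF_minus:
  assumes k: "\<bar>k\<bar> < 1"
  shows "ellF (- \<phi>) k = - ellF \<phi> k"
proof -
  have "\<forall>x. ((\<lambda>x. ellF x k + ellF (- x) k) has_real_derivative 0) (at x)"
    using k by (auto intro!: derivative_eq_intros simp: ell_integrand_minus)
  from DERIV_isconst_all[OF this, of \<phi> 0] show ?thesis by simp
qed

lemma ellF_pi:
  assumes k: "\<bar>k\<bar> < 1"
  shows "ellF pi k = 2 * ellK k"
proof -
  have "\<forall>x. ((\<lambda>x. ellF (pi/2 + x) k + ellF (pi/2 - x) k) has_real_derivative 0) (at x)"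
    using k by (auto intro!: derivative_eq_intros simp: ell_integrand_reflect)
  from DERIV_isconst_all[OF this, of "pi/2" 0] show ?thesis
    by (simp add: ellF_pi_half)
qed

lemma ellF_add_pi:
  assumes k: "\<bar>k\<bar> < 1"
  shows "ellF (\<phi> + pi) k = ellF \<phi> k + 2 * ellK k"
proof -
  have "\<forall>x. ((\<lambda>x. ellF (x + pi) k - ellF x k) has_real_derivative 0) (at x)"
    using k by (auto intro!: derivative_eq_intros simp: ell_integrand_add_pi)
  from DERIV_isconst_all[OF this, of \<phi> 0] show ?thesis
    by (simp add: ellF_pi[OF k])
qed

lemma ellF_ge:
  assumes k: "\<bar>k\<bar> < 1" and "0 \<le> \<phi>"
  shows "\<phi> \<le> ellF \<phi> k"
proof -
  have "integral {0..\<phi>} (\<lambda>_. 1) \<le> integral {0..\<phi>} (ell_integrand k)"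
    by (rule integral_le) (auto intro: integrable_ell_integrand[OF k] ell_integrand_ge_1[OF k])
  then show ?thesis
    using assms(2) by (simp add: ellF_eq_integral)
qed

lemma ellF_strict_mono:
  assumes k: "\<bar>k\<bar> < 1"
  shows "strict_mono (\<lambda>\<phi>. ellF \<phi> k)"
proof (rule strict_monoI)
  show "ellF a k < ellF b k" if "a < b" for a b
    using DERIV_pos_imp_increasing[OF that, of "\<lambda>\<phi>. ellF \<phi> k"]
      has_real_derivative_ellF[OF k] ell_integrand_pos[OF k] by blast
qed

lemma ex1_ellF_eq:
  assumes k: "\<bar>k\<bar> < 1"
  shows "\<exists>!\<phi>. ellF \<phi> k = u"
proof -
  have "ellF (- \<bar>u\<bar>) k \<le> u" "u \<le> ellF \<bar>u\<bar> k"
    using ellF_ge[OF k, of "\<bar>u\<bar>"] ellF_minus[OF k, of "\<bar>u\<bar>"] by auto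
  moreover have "isCont (\<lambda>\<phi>. ellF \<phi> k) x" for x
    using has_real_derivative_ellF[OF k] by (rule DERIV_isCont)
  ultimately have "\<exists>\<phi>. ellF \<phi> k = u"
    using IVT[of "\<lambda>\<phi>. ellF \<phi> k" "- \<bar>u\<bar>" u "\<bar>u\<bar>"] by auto
  then show ?thesis
    using strict_mono_eq[OF ellF_strict_mono[OF k]] by auto
qed

lemma ellF_jam: "\<bar>k\<bar> < 1 \<Longrightarrow> ellF (jam u k) k = u"
  unfolding jam_def by (rule theI'[OF ex1_ellF_eq])

lemma jam_ellF: "\<bar>k\<bar> < 1 \<Longrightarrow> jam (ellF \<phi> k) k = \<phi>"
  unfolding jam_def by (rule the1_equality[OF ex1_ellF_eq]) auto

lemma jam_minus:
  assumes k: "\<bar>k\<bar> < 1"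
  shows "jam (- u) k = - jam u k"
proof -
  have "ellF (- jam u k) k = - u"
    by (simp add: ellF_minus[OF k] ellF_jam[OF k])
  then show ?thesis
    using jam_ellF[OF k, of "- jam u k"] by simp
qed

lemma jam_add_2ellK:
  assumes k: "\<bar>k\<bar> < 1"
  shows "jam (u + 2 * ellK k) k = jam u k + pi"
proof -
  have "ellF (jam u k + pi) k = u + 2 * ellK k"
    by (simp add: ellF_add_pi[OF k] ellF_jam[OF k])
  then show ?thesis
    using jam_ellF[OF k, of "jam u k + pi"] by simp
qed

lemma jsn_minus: "\<bar>k\<bar> < 1 \<Longrightarrow> jsn (- u) k = - jsn u k"
  by (simp add: jsn_def jam_minus)

lemma jcn_minus: "\<bar>k\<bar> < 1 \<Longrightarrow> jcn (- u) k = jcn u k"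
  by (simp add: jcn_def jam_minus)

lemma jam_add_4ellK: "\<bar>k\<bar> < 1 \<Longrightarrow> jam (u + 4 * ellK k) k = jam u k + 2 * pi"
  using jam_add_2ellK[of k "u + 2 * ellK k"] jam_add_2ellK[of k u] by (simp add: algebra_simps)

lemma jsn_add_4ellK: "\<bar>k\<bar> < 1 \<Longrightarrow> jsn (u + 4 * ellK k) k = jsn u k"
  by (simp add: jsn_def jam_add_4ellK)

lemma jcn_add_4ellK: "\<bar>k\<bar> < 1 \<Longrightarrow> jcn (u + 4 * ellK k) k = jcn u k"
  by (simp add: jcn_def jam_add_4ellK)

lemma ellF_eq_integral_unit:
  assumes k: "\<bar>k\<bar> < 1"
  shows "ellF \<phi> k = integral {0..1} (\<lambda>s. \<phi> * ell_integrand k (\<phi> * s))"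
proof -
  have pos: "ellF \<phi> k = integral {0..1} (\<lambda>s. \<phi> * ell_integrand k (\<phi> * s))" if "0 < \<phi>" for \<phi>
  proof -
    have "(ell_integrand k has_integral integral {0..\<phi>} (ell_integrand k)) (cbox 0 \<phi>)"
      using integrable_integral[OF integrable_ell_integrand[OF k]] by simp
    from has_integral_affinity[OF this, of \<phi> 0] that
    have "((\<lambda>s. ell_integrand k (\<phi> * s)) has_integral integral {0..\<phi>} (ell_integrand k) / \<phi>)
            ((\<lambda>x. x / \<phi>) ` {0..\<phi>})"
      by (simp add: field_simps)
    moreover have "(\<lambda>x. x / \<phi>) ` {0..\<phi>} = {0..1}"
      using image_affinity_atLeastAtMost_div[of \<phi> 0 0 \<phi>] that by simp
    ultimately have "((\<lambda>s. \<phi> * ell_integrand k (\<phi> * s)) has_integral integral {0..\<phi>} (ell_integrand k)) {0..1}"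
      using has_integral_mult_right[of _ _ "{0..1}" \<phi>] that by fastforce
    then have "integral {0..1} (\<lambda>s. \<phi> * ell_integrand k (\<phi> * s)) = integral {0..\<phi>} (ell_integrand k)"
      by (rule integral_unique)
    moreover have "ellF \<phi> k = integral {0..\<phi>} (ell_integrand k)"
      using that by (simp add: ellF_eq_integral)
    ultimately show ?thesis
      by simp
  qed
  consider "0 < \<phi>" | "\<phi> = 0" | "0 < - \<phi>" by linarith
  then show ?thesis
  proof cases
    case 3
    from pos[OF this] show ?thesis
      using ellF_minus[OF k, of "- \<phi>"] by (simp add: ell_integrand_minus integral_neg[symmetric])
  qed (simp_all add: pos)
qed

lemma smooth_on_ellF: "smooth_on (UNIV \<times> {-1<..<1}) (\<lambda>z. ellF (fst z) (snd z))"
proof (rule smooth_onI)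
  fix n
  let ?U = "UNIV \<times> {-1<..<1} :: (real \<times> real) set"
  have U: "open ?U" "convex ?U"
    by (auto intro!: open_Times convex_Times)
  have "open (?U \<times> (UNIV :: real set))"
    using U by (intro open_Times) auto
  moreover have "Cn_on n (?U \<times> UNIV) (\<lambda>w. (fst (fst w) * snd w, snd (fst w)))"
    by (intro Cn_on_Pair Cn_on_mult Cn_on_bounded_linear_compose[OF bounded_linear_fst]
        Cn_on_bounded_linear_compose[OF bounded_linear_snd] Cn_on_fst Cn_on_snd)
  ultimately have "Cn_on n (?U \<times> UNIV) (\<lambda>w. ell_integrand (snd (fst w)) (fst (fst w) * snd w))"
    using Cn_on_compose[OF _ smooth_onD[OF smooth_on_ell_integrand]] by (fastforce simp: mem_Times_iff)
  then have "Cn_on n (?U \<times> UNIV) (\<lambda>w. fst (fst w) * ell_integrand (snd (fst w)) (fst (fst w) * snd w))"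
    by (rule Cn_on_mult[OF Cn_on_bounded_linear_compose[OF bounded_linear_fst Cn_on_fst]])
  from Cn_on_parametric_integral[OF U this, of 0 1]
  show "Cn_on n ?U (\<lambda>z. ellF (fst z) (snd z))"
    by (rule Cn_on_cong[OF U(1), rotated]) (auto simp: ellF_eq_integral_unit)
qed

lemma smooth_on_jam: "smooth_on (UNIV \<times> {-1<..<1}) (\<lambda>w. jam (fst w) (snd w))"
proof (rule smooth_on_partial_inverse[OF _ _ smooth_on_ellF, where dF="\<lambda>z. ell_integrand (snd z) (fst z)"])
  show "ell_integrand (snd z) (fst z) \<noteq> 0" if "z \<in> UNIV \<times> {-1<..<1}" for z :: "real \<times> real"
    using that ell_integrand_pos[of "snd z" "fst z"] by (auto simp: abs_less_iff)
qed (auto intro!: open_Times has_real_derivative_ellF simp: ellF_jam jam_ellF)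

definition jdn :: "real \<Rightarrow> real \<Rightarrow> real" where
  "jdn u k = sqrt (1 - k\<^sup>2 * (jsn u k)\<^sup>2)"

lemma jsn_sq_add_jcn_sq: "(jsn u k)\<^sup>2 + (jcn u k)\<^sup>2 = 1"
  by (simp add: jsn_def jcn_def)

lemma jdn_pos:
  assumes "\<bar>k\<bar> < 1"
  shows "0 < jdn u k"
  using ell_radicand_pos[OF assms, of "jam u k"] by (simp add: jdn_def jsn_def)

lemma jdn_sq:
  assumes "\<bar>k\<bar> < 1"
  shows "(jdn u k)\<^sup>2 = 1 - k\<^sup>2 * (jsn u k)\<^sup>2"
  using ell_radicand_pos[OF assms, of "jam u k"] by (simp add: jdn_def jsn_def)

lemma has_real_derivative_jam:
  assumes k: "\<bar>k\<bar> < 1"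
  shows "((\<lambda>u. jam u k) has_real_derivative jdn u k) (at u)"
proof -
  have "continuous_on UNIV (\<lambda>u. jam (fst (u, k)) (snd (u, k)))"
    by (rule continuous_on_compose2[OF Cn_on_imp_continuous_on[OF smooth_onD[OF smooth_on_jam, of 0]]])
      (use k in \<open>auto intro!: continuous_intros simp: abs_less_iff\<close>)
  then have cont: "isCont (\<lambda>u. jam u k) u"
    by (simp add: continuous_on_eq_continuous_at)
  have "ell_integrand k (jam u k) \<noteq> 0"
    using ell_integrand_pos[OF k] by (metis less_irrefl)
  from DERIV_inverse_function[OF has_real_derivative_ellF[OF k] this _ _ ellF_jam[OF k] cont, of "u - 1" "u + 1"]
  have "((\<lambda>u. jam u k) has_real_derivative inverse (ell_integrand k (jam u k))) (at u)"
    by simp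
  then show ?thesis
    by (simp add: ell_integrand_def jdn_def jsn_def)
qed

lemma has_real_derivative_jsn [derivative_intros]:
  assumes "\<bar>k\<bar> < 1" "(g has_real_derivative g') (at x within S)"
  shows "((\<lambda>x. jsn (g x) k) has_real_derivative jcn (g x) k * jdn (g x) k * g') (at x within S)"
proof -
  have "((\<lambda>u. jsn u k) has_real_derivative jcn u k * jdn u k) (at u)" for u
    using DERIV_chain2[OF DERIV_sin has_real_derivative_jam[OF assms(1)]]
    by (simp add: jsn_def jcn_def o_def)
  from DERIV_chain2[OF this assms(2)] show ?thesis .
qed

lemma has_real_derivative_jcn [derivative_intros]:
  assumes "\<bar>k\<bar> < 1" "(g has_real_derivative g') (at x within S)"
  shows "((\<lambda>x. jcn (g x) k) has_real_derivative - jsn (g x) k * jdn (g x) k * g') (at x within S)"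
proof -
  have "((\<lambda>u. jcn u k) has_real_derivative - jsn u k * jdn u k) (at u)" for u
    using DERIV_chain2[OF DERIV_cos has_real_derivative_jam[OF assms(1)]]
    by (simp add: jsn_def jcn_def o_def)
  from DERIV_chain2[OF this assms(2)] show ?thesis .
qed

lemma has_real_derivative_jdn [derivative_intros]:
  assumes k: "\<bar>k\<bar> < 1" and g: "(g has_real_derivative g') (at x within S)"
  shows "((\<lambda>x. jdn (g x) k) has_real_derivative - k\<^sup>2 * jsn (g x) k * jcn (g x) k * g') (at x within S)"
proof -
  have "((\<lambda>u. jdn u k) has_real_derivative - k\<^sup>2 * jsn u k * jcn u k) (at u)" for u
  proof -
    have "((\<lambda>u. 1 - k\<^sup>2 * (jsn u k)\<^sup>2) has_real_derivative
            - (k\<^sup>2 * (2 * jsn u k * (jcn u k * jdn u k)))) (at u)"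
      using k by (auto intro!: derivative_eq_intros has_real_derivative_jsn)
    moreover have "0 < 1 - k\<^sup>2 * (jsn u k)\<^sup>2"
      using ell_radicand_pos[OF k, of "jam u k"] by (simp add: jsn_def)
    ultimately have "((\<lambda>u. jdn u k) has_real_derivative
        inverse (jdn u k) / 2 * - (k\<^sup>2 * (2 * jsn u k * (jcn u k * jdn u k)))) (at u)"
      unfolding jdn_def by (rule DERIV_chain2[OF DERIV_real_sqrt, rotated])
    then show ?thesis
      using jdn_pos[OF k, of u] by (simp add: field_simps)
  qed
  from DERIV_chain2[OF this g] show ?thesis .
qed

lemma ellK_0: "ellK 0 = pi/2"
  by (simp add: ellK_def)

lemma ellK_ge: "\<bar>k\<bar> < 1 \<Longrightarrow> pi/2 \<le> ellK k"
  using ellF_ge[of k "pi/2"] by (simp add: ellF_pi_half)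

lemma ellK_pos: "\<bar>k\<bar> < 1 \<Longrightarrow> 0 < ellK k"
  using ellK_ge[of k] pi_gt_zero by linarith

lemma smooth_on_ellK: "smooth_on {-1<..<1} ellK"
proof (rule smooth_onI)
  fix n
  have "Cn_on n {-1<..<1} (\<lambda>k. ellF (fst (pi/2, k)) (snd (pi/2, k)))"
    by (rule Cn_on_compose[OF _ smooth_onD[OF smooth_on_ellF] Cn_on_Pair[OF Cn_on_const Cn_on_id]]) auto
  then show "Cn_on n {-1<..<1} ellK"
    by (simp add: ellF_pi_half)
qed

definition ellK' :: "real \<Rightarrow> real" where
  "ellK' k = integral {0..pi/2} (\<lambda>\<theta>. k * (sin \<theta>)\<^sup>2 * ell_integrand k \<theta> ^ 3)"

lemma has_real_derivative_ell_integrand_modulus: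
  assumes k: "\<bar>k\<bar> < 1"
  shows "((\<lambda>k. ell_integrand k \<theta>) has_real_derivative k * (sin \<theta>)\<^sup>2 * ell_integrand k \<theta> ^ 3) (at k)"
proof -
  define r where "r = 1 - k\<^sup>2 * (sin \<theta>)\<^sup>2"
  have r: "0 < r"
    unfolding r_def by (rule ell_radicand_pos[OF k])
  have "((\<lambda>k. 1 / sqrt (1 - k\<^sup>2 * (sin \<theta>)\<^sup>2)) has_real_derivative
          - (inverse (sqrt r) / 2 * (- (2 * k) * (sin \<theta>)\<^sup>2)) / (sqrt r)\<^sup>2) (at k)"
    using r unfolding r_def by (auto intro!: derivative_eq_intros simp: power2_eq_square)
  moreover have "- (inverse (sqrt r) / 2 * (- (2 * k) * (sin \<theta>)\<^sup>2)) / (sqrt r)\<^sup>2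
      = k * (sin \<theta>)\<^sup>2 * (1 / sqrt r) ^ 3"
    using r by (simp add: field_simps power2_eq_square power3_eq_cube)
  ultimately show ?thesis
    by (simp add: ell_integrand_def[abs_def] r_def)
qed

lemma has_real_derivative_ell_integrand_angle:
  assumes k: "\<bar>k\<bar> < 1"
  shows "(ell_integrand k has_real_derivative k\<^sup>2 * sin \<theta> * cos \<theta> * ell_integrand k \<theta> ^ 3) (at \<theta>)"
proof -
  define r where "r = 1 - k\<^sup>2 * (sin \<theta>)\<^sup>2"
  have r: "0 < r"
    unfolding r_def by (rule ell_radicand_pos[OF k])
  have "((\<lambda>\<theta>. 1 / sqrt (1 - k\<^sup>2 * (sin \<theta>)\<^sup>2)) has_real_derivative
          - (inverse (sqrt r) / 2 * (- (k\<^sup>2 * (2 * sin \<theta> * cos \<theta>)))) / (sqrt r)\<^sup>2) (at \<theta>)"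
    using r unfolding r_def by (auto intro!: derivative_eq_intros simp: power2_eq_square)
  moreover have "- (inverse (sqrt r) / 2 * (- (k\<^sup>2 * (2 * sin \<theta> * cos \<theta>)))) / (sqrt r)\<^sup>2
      = k\<^sup>2 * sin \<theta> * cos \<theta> * (1 / sqrt r) ^ 3"
    using r by (simp add: field_simps power2_eq_square power3_eq_cube)
  ultimately show ?thesis
    by (simp add: ell_integrand_def[abs_def] r_def)
qed

lemma has_real_derivative_ellK:
  assumes k: "\<bar>k\<bar> < 1"
  shows "(ellK has_real_derivative ellK' k) (at k)"
proof -
  let ?U = "{-1<..<1::real}"
  have kU: "k \<in> ?U"
    using k by auto
  have "((\<lambda>x. integral (cbox 0 (pi/2)) (\<lambda>\<theta>. ell_integrand x \<theta>)) has_field_derivative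
          integral (cbox 0 (pi/2)) (\<lambda>\<theta>. k * (sin \<theta>)\<^sup>2 * ell_integrand k \<theta> ^ 3)) (at k within ?U)"
  proof (rule leibniz_rule_field_derivative[where fx="\<lambda>x \<theta>. x * (sin \<theta>)\<^sup>2 * ell_integrand x \<theta> ^ 3"])
    show "((\<lambda>x. ell_integrand x t) has_field_derivative x * (sin t)\<^sup>2 * ell_integrand x t ^ 3) (at x within ?U)"
      if "x \<in> ?U" for x t
      using that by (intro has_field_derivative_at_within[OF has_real_derivative_ell_integrand_modulus]) auto
    show "ell_integrand x integrable_on cbox 0 (pi/2)" if "x \<in> ?U" for x
      using that integrable_ell_integrand[of x 0 "pi/2"] by auto
    have "sqrt (1 - (fst z)\<^sup>2 * (sin (snd z))\<^sup>2) \<noteq> 0" if "z \<in> ?U \<times> cbox 0 (pi/2)" for z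
      using that ell_radicand_pos[of "fst z" "snd z"] by (auto simp: abs_less_iff)
    then have "continuous_on (?U \<times> cbox 0 (pi/2))
        (\<lambda>z. fst z * (sin (snd z))\<^sup>2 * (1 / sqrt (1 - (fst z)\<^sup>2 * (sin (snd z))\<^sup>2)) ^ 3)"
      by (intro continuous_intros) auto
    then show "continuous_on (?U \<times> cbox 0 (pi/2)) (\<lambda>(x, t). x * (sin t)\<^sup>2 * ell_integrand x t ^ 3)"
      by (simp add: split_beta ell_integrand_def)
  qed (use kU in auto)
  then show ?thesis
    using at_within_open[OF kU] by (simp add: ellK'_def ellK_eq_integral[abs_def])
qed

text \<open>Adding \<open>k/2\<close> times the integral of \<open>(sin \<theta> cos \<theta> ell_integrand k \<theta>)'\<close>, which vanishes
  over \<open>[0, pi/2]\<close>, turns \<open>ellK' k - k ellK k / 2\<close> into the integral of a nonnegative function.\<close>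

lemma ellK'_ge:
  assumes k0: "0 \<le> k" and k1: "k < 1"
  shows "k * ellK k / 2 \<le> ellK' k"
proof -
  have k: "\<bar>k\<bar> < 1"
    using k0 k1 by simp
  define g where "g = ell_integrand k"
  define A where "A \<theta> = k * (sin \<theta>)\<^sup>2 * g \<theta> ^ 3" for \<theta>
  define C where "C \<theta> = (cos \<theta> * cos \<theta> - sin \<theta> * sin \<theta>) * g \<theta>
      + k\<^sup>2 * sin \<theta> * cos \<theta> * g \<theta> ^ 3 * (sin \<theta> * cos \<theta>)" for \<theta>
  have "((\<lambda>\<theta>. sin \<theta> * cos \<theta> * g \<theta>) has_real_derivative C \<theta>) (at \<theta>)" for \<theta>
    unfolding C_def g_def
    using DERIV_mult[OF DERIV_mult[OF DERIV_sin DERIV_cos] has_real_derivative_ell_integrand_angle[OF k, of \<theta>]]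
    by simp
  then have C_int: "(C has_integral 0) {0..pi/2}"
    using fundamental_theorem_of_calculus[of 0 "pi/2" "\<lambda>\<theta>. sin \<theta> * cos \<theta> * g \<theta>" C]
    by (simp add: has_real_derivative_iff_has_vector_derivative[symmetric] has_field_derivative_at_within)
  have A_int: "(A has_integral ellK' k) {0..pi/2}"
    unfolding ellK'_def A_def g_def
    by (intro integrable_integral integrable_continuous_interval continuous_intros continuous_on_ell_integrand[OF k])
  have g_int: "(g has_integral ellK k) {0..pi/2}"
    unfolding ellK_eq_integral g_def by (intro integrable_integral integrable_ell_integrand[OF k])
  have "((\<lambda>\<theta>. A \<theta> - (k/2) * g \<theta> + (k/2) * C \<theta>) has_integral (ellK' k - (k/2) * ellK k + (k/2) * 0)) {0..pi/2}"
    by (intro has_integral_add has_integral_diff has_integral_mult_right A_int g_int C_int)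
  moreover have "0 \<le> A \<theta> - (k/2) * g \<theta> + (k/2) * C \<theta>" for \<theta>
  proof -
    have g1: "1 \<le> g \<theta>"
      unfolding g_def by (rule ell_integrand_ge_1[OF k])
    then have "g \<theta> * 1 \<le> g \<theta> * (g \<theta>)\<^sup>2"
      by (intro mult_left_mono) (auto simp: one_le_power)
    then have "g \<theta> \<le> g \<theta> ^ 3"
      by (simp add: power2_eq_square power3_eq_cube)
    moreover have "A \<theta> - (k/2) * g \<theta> + (k/2) * C \<theta>
        = k * (sin \<theta>)\<^sup>2 * (g \<theta> ^ 3 - g \<theta>) + (k ^ 3 / 2) * (sin \<theta>)\<^sup>2 * (cos \<theta>)\<^sup>2 * g \<theta> ^ 3"
      unfolding A_def C_def using sin_cos_squared_add[of \<theta>] by algebra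
    ultimately show ?thesis
      using g1 k0 by simp
  qed
  ultimately have "0 \<le> ellK' k - (k/2) * ellK k + (k/2) * 0"
    by (rule has_integral_nonneg)
  then show ?thesis
    by simp
qed

lemma sqrt_one_minus_sq_bounds:
  fixes c :: real
  assumes "0 < c" "c < 1"
  shows "0 < sqrt (1 - c\<^sup>2)" "sqrt (1 - c\<^sup>2) < 1"
proof -
  have "0 < c\<^sup>2" "c\<^sup>2 < 1"
    using assms by (auto simp: power_less_one_iff)
  then show "0 < sqrt (1 - c\<^sup>2)" "sqrt (1 - c\<^sup>2) < 1"
    by simp_all
qed

lemma ell_integrand_ge_reciprocal:
  assumes c: "0 < c" "c < 1" and \<theta>: "0 \<le> \<theta>" "\<theta> \<le> pi/2"
  shows "1 / (c + (pi/2 - \<theta>)) \<le> ell_integrand (sqrt (1 - c\<^sup>2)) \<theta>"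
proof -
  have "c\<^sup>2 < 1"
    using c by (simp add: power_less_one_iff)
  then have "1 - (sqrt (1 - c\<^sup>2))\<^sup>2 * (sin \<theta>)\<^sup>2 = (cos \<theta>)\<^sup>2 + c\<^sup>2 * (sin \<theta>)\<^sup>2"
    using sin_cos_squared_add[of \<theta>] by (simp add: algebra_simps)
  also have "\<dots> \<le> (cos \<theta>)\<^sup>2 + c\<^sup>2"
    by (simp add: mult_left_le abs_square_le_1)
  also have "\<dots> \<le> (cos \<theta> + c)\<^sup>2"
    using c \<theta> cos_ge_zero[of \<theta>] by (simp add: power2_eq_square algebra_simps)
  also have "\<dots> \<le> (c + (pi/2 - \<theta>))\<^sup>2"
  proof (rule power_mono)
    have "cos \<theta> = sin (pi/2 - \<theta>)"
      by (simp add: sin_cos_eq)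
    also have "\<dots> \<le> pi/2 - \<theta>"
      using \<theta> by (intro sin_x_le_x) simp
    finally show "cos \<theta> + c \<le> c + (pi/2 - \<theta>)"
      by simp
    show "0 \<le> cos \<theta> + c"
      using c \<theta> cos_ge_zero[of \<theta>] by simp
  qed
  finally have "sqrt (1 - (sqrt (1 - c\<^sup>2))\<^sup>2 * (sin \<theta>)\<^sup>2) \<le> c + (pi/2 - \<theta>)"
    using c \<theta> real_sqrt_le_iff[THEN iffD2] by (metis real_sqrt_abs abs_of_nonneg add_nonneg_nonneg diff_ge_0_iff_ge less_imp_le)
  moreover have "0 < 1 - (sqrt (1 - c\<^sup>2))\<^sup>2 * (sin \<theta>)\<^sup>2"
    using sqrt_one_minus_sq_bounds[OF c] by (intro ell_radicand_pos) simp
  ultimately show ?thesis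
    unfolding ell_integrand_def by (intro frac_le) auto
qed

lemma ln_le_ellK:
  assumes c: "0 < c" "c < 1"
  shows "ln ((c + pi/2) / c) \<le> ellK (sqrt (1 - c\<^sup>2))"
proof -
  have k: "\<bar>sqrt (1 - c\<^sup>2)\<bar> < 1"
    using sqrt_one_minus_sq_bounds[OF c] by simp
  have "((\<lambda>\<theta>. - ln (c + (pi/2 - \<theta>))) has_real_derivative 1 / (c + (pi/2 - \<theta>))) (at \<theta> within {0..pi/2})"
    if "\<theta> \<in> {0..pi/2}" for \<theta>
    using that c by (auto intro!: derivative_eq_intros simp: field_simps)
  then have "((\<lambda>\<theta>. 1 / (c + (pi/2 - \<theta>))) has_integral (ln (c + pi/2) - ln c)) {0..pi/2}"
    using fundamental_theorem_of_calculus[of 0 "pi/2" "\<lambda>\<theta>. - ln (c + (pi/2 - \<theta>))"]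
    by (simp add: has_real_derivative_iff_has_vector_derivative[symmetric])
  then have "ln (c + pi/2) - ln c \<le> ellK (sqrt (1 - c\<^sup>2))"
    unfolding ellK_eq_integral
    by (rule has_integral_le[OF _ integrable_integral[OF integrable_ell_integrand[OF k]]])
      (use c ell_integrand_ge_reciprocal in auto)
  moreover have "0 < c + pi/2"
    using c pi_gt_zero by linarith
  ultimately show ?thesis
    using c by (simp add: ln_div)
qed

lemma ellK_unbounded: "\<exists>k. 0 < k \<and> k < 1 \<and> M < ellK k"
proof -
  define c where "c = min (1/2) (pi / (2 * exp M))"
  have c: "0 < c" "c < 1"
    by (auto simp: c_def)
  have "c * (2 * exp M) \<le> pi"
    using min.cobounded2[of "1/2" "pi / (2 * exp M)"] by (simp add: c_def le_divide_eq)
  then have "exp M \<le> pi / (2 * c)"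
    using c by (simp add: field_simps)
  also have "\<dots> < (c + pi/2) / c"
    using c by (simp add: field_simps)
  finally have "M < ln ((c + pi/2) / c)"
    using ln_strict_mono[of "exp M"] by simp
  also have "\<dots> \<le> ellK (sqrt (1 - c\<^sup>2))"
    by (rule ln_le_ellK[OF c])
  finally show ?thesis
    using sqrt_one_minus_sq_bounds[OF c] by blast
qed

section \<open>The parameters of the wave\<close>

lemma s_par_radicand_eq: "k ^ 4 - k\<^sup>2 + 1 = (k\<^sup>2 - 1/2)\<^sup>2 + (3/4::real)"
  by (simp add: power2_eq_square power4_eq_xxxx algebra_simps)

lemma s_par_radicand_pos: "0 < k ^ 4 - k\<^sup>2 + (1::real)"
  unfolding s_par_radicand_eq by (simp add: add_nonneg_pos)

lemma s_par_pos: "0 < s_par k"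
  by (simp add: s_par_def s_par_radicand_pos)

lemma s_par_sq: "(s_par k)\<^sup>2 = k ^ 4 - k\<^sup>2 + 1"
  using s_par_radicand_pos[of k] by (simp add: s_par_def)

lemma s_par_0: "s_par 0 = 1"
  by (simp add: s_par_def)

lemma s_par_ge_half: "1/2 \<le> s_par k"
proof -
  have "1/4 \<le> k ^ 4 - k\<^sup>2 + 1"
    unfolding s_par_radicand_eq using zero_le_power2[of "k\<^sup>2 - 1/2"] by linarith
  then have "sqrt (1/4) \<le> s_par k"
    unfolding s_par_def by (rule real_sqrt_le_mono)
  moreover have "sqrt (1/4) = 1/2"
    by (rule real_sqrt_unique) (simp_all add: power2_eq_square)
  ultimately show ?thesis
    by simp
qed

lemma s_par_le_1:
  assumes "k\<^sup>2 \<le> 1"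
  shows "s_par k \<le> 1"
proof -
  have "k\<^sup>2 * k\<^sup>2 \<le> k\<^sup>2 * 1"
    using assms by (intro mult_left_mono) auto
  then show ?thesis
    by (simp add: s_par_def power4_eq_xxxx power2_eq_square)
qed

lemma s_par_gt: "k\<^sup>2 - 1 < s_par k"
proof (cases "k\<^sup>2 < 1")
  case False
  then have "(k\<^sup>2 - 1)\<^sup>2 < (s_par k)\<^sup>2"
    unfolding s_par_sq by (simp add: power2_eq_square power4_eq_xxxx algebra_simps)
  then show ?thesis
    using s_par_pos[of k] by (simp add: power2_less_imp_less)
qed (use s_par_pos[of k] in simp)

lemma q_par_neg: "q_par k < 0"
  using s_par_gt[of k] by (simp add: q_par_def)

lemma q_par_bounds:
  assumes "0 < k" "k < 1"
  shows "q_par k \<in> {-2<..<-1}"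
proof -
  have k2: "0 < k\<^sup>2" "k\<^sup>2 < 1"
    using assms by (auto simp: power_less_one_iff)
  have "k\<^sup>2 * k\<^sup>2 < k\<^sup>2 * 1"
    using k2 by (intro mult_strict_left_mono) auto
  then have "s_par k < 1"
    by (simp add: s_par_def power4_eq_xxxx power2_eq_square)
  moreover have "(k\<^sup>2)\<^sup>2 < (s_par k)\<^sup>2"
    unfolding s_par_sq using k2 by (simp add: power4_eq_xxxx power2_eq_square)
  then have "k\<^sup>2 < s_par k"
    using s_par_pos[of k] by (simp add: power2_less_imp_less)
  ultimately show ?thesis
    using k2 unfolding q_par_def greaterThanLessThan_iff by (intro conjI; linarith)
qed

lemma has_real_derivative_s_par: "(s_par has_real_derivative (2 * k ^ 3 - k) / s_par k) (at k)"
  unfolding s_par_def using s_par_radicand_pos[of k]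
  by (auto intro!: derivative_eq_intros simp: field_simps)

lemma smooth_on_s_par: "smooth_on S s_par"
proof (rule smooth_onI)
  fix n
  have "Cn_on n UNIV (\<lambda>k::real. sqrt (k ^ 4 - k\<^sup>2 + 1))"
    by (intro Cn_on_sqrt Cn_on_add Cn_on_diff Cn_on_power Cn_on_id Cn_on_const s_par_radicand_pos) auto
  then show "Cn_on n S s_par"
    unfolding s_par_def[abs_def] by (rule Cn_on_subset) simp
qed

lemma omega_par_eq: "omega_par L k = 16 * (ellK k)\<^sup>2 * s_par k / L\<^sup>2"
proof -
  have "(1 - k\<^sup>2) * s_par k + k ^ 4 - k\<^sup>2 + 1 = - s_par k * q_par k"
    using s_par_sq[of k] by (simp add: q_par_def algebra_simps power2_eq_square)
  then show ?thesis
    using q_par_neg[of k] by (simp add: omega_par_def q_par_def[symmetric])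
qed

lemma a_par_eq: "a_par L k = 2 * root 4 ((ellK k)\<^sup>2 * (2 + 2 * s_par k - k\<^sup>2) * L\<^sup>2) / L"
proof -
  have "(k\<^sup>2 - 1 - s_par k) * (- k\<^sup>2 - 1 - s_par k) = 2 + 2 * s_par k - k\<^sup>2"
    using s_par_sq[of k] by (simp add: algebra_simps power2_eq_square power4_eq_xxxx)
  then show ?thesis
    unfolding a_par_def by (simp add: mult.assoc)
qed

text \<open>Both \<open>omega\<close> and \<open>a\<close> are built from \<open>K(k)\<^sup>2 h(k)\<close> for a weight \<open>h\<close>; the lower bound
  \<open>k K / 2 \<le> K'\<close> reduces the positivity of its derivative to that of \<open>k h + h'\<close>.\<close>

lemma ellK_sq_mult_deriv_pos:
  assumes k: "0 < k" "k < 1" and h: "0 \<le> h" "0 < k * h + h'"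
  shows "0 < 2 * ellK k * ellK' k * h + (ellK k)\<^sup>2 * h'"
proof -
  have K: "0 < ellK k"
    using k by (intro ellK_pos) simp
  have "(ellK k)\<^sup>2 * (k * h + h') \<le> 2 * ellK k * ellK' k * h + (ellK k)\<^sup>2 * h'"
    using mult_right_mono[OF mult_left_mono[OF ellK'_ge[of k] K[THEN less_imp_le]] h(1)] k
    by (simp add: power2_eq_square algebra_simps)
  moreover have "0 < (ellK k)\<^sup>2 * (k * h + h')"
    using K h by simp
  ultimately show ?thesis
    by linarith
qed

lemma ellK_sq_mult_strict_mono:
  assumes deriv: "\<And>k. \<bar>k\<bar> < 1 \<Longrightarrow> (h has_real_derivative h' k) (at k)"
    and pos: "\<And>k. 0 < k \<Longrightarrow> k < 1 \<Longrightarrow> 0 \<le> h k" "\<And>k. 0 < k \<Longrightarrow> k < 1 \<Longrightarrow> 0 < k * h k + h' k"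
    and ab: "0 \<le> a" "a < b" "b < 1"
  shows "(ellK a)\<^sup>2 * h a < (ellK b)\<^sup>2 * h b"
proof -
  have D: "((\<lambda>k. (ellK k)\<^sup>2 * h k) has_real_derivative
            2 * ellK k * ellK' k * h k + (ellK k)\<^sup>2 * h' k) (at k)" if "\<bar>k\<bar> < 1" for k
    using that by (auto intro!: derivative_eq_intros has_real_derivative_ellK deriv simp: power2_eq_square)
  show ?thesis
  proof (rule DERIV_pos_imp_increasing_open[OF ab(2)])
    show "\<exists>y. ((\<lambda>k. (ellK k)\<^sup>2 * h k) has_real_derivative y) (at x) \<and> 0 < y" if "a < x" "x < b" for x
      using that ab D[of x] ellK_sq_mult_deriv_pos[of x "h x" "h' x"] pos[of x] by auto
    show "continuous_on {a..b} (\<lambda>k. (ellK k)\<^sup>2 * h k)"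
      using ab D[THEN DERIV_isCont] by (intro continuous_at_imp_continuous_on) auto
  qed
qed

lemma s_par_weight_pos:
  assumes "0 < k"
  shows "0 < k * s_par k + (2 * k ^ 3 - k) / s_par k"
proof -
  have "k * (s_par k)\<^sup>2 + (2 * k ^ 3 - k) = k * (k ^ 4 + k\<^sup>2)"
    unfolding s_par_sq by algebra
  then have "k * s_par k + (2 * k ^ 3 - k) / s_par k = k * (k ^ 4 + k\<^sup>2) / s_par k"
    using s_par_pos[of k] by (simp add: field_simps power2_eq_square)
  moreover have "0 < k ^ 4 + k\<^sup>2"
    using assms by (simp add: add_nonneg_pos)
  ultimately show ?thesis
    using assms s_par_pos[of k] by simp
qed

lemma amplitude_weight_pos:
  assumes "0 < k" "k < 1"
  shows "0 < k * (2 + 2 * s_par k - k\<^sup>2) + (2 * ((2 * k ^ 3 - k) / s_par k) - 2 * k)"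
proof -
  have "k * (2 + 2 * s_par k - k\<^sup>2) * s_par k + 2 * (2 * k ^ 3 - k) - 2 * k * s_par k
      = k ^ 3 * (2 * k\<^sup>2 + 2 - s_par k)"
    using s_par_sq[of k] by algebra
  then have "k * (2 + 2 * s_par k - k\<^sup>2) + (2 * ((2 * k ^ 3 - k) / s_par k) - 2 * k)
      = k ^ 3 * (2 * k\<^sup>2 + 2 - s_par k) / s_par k"
    using s_par_pos[of k] by (simp add: field_simps)
  moreover have "s_par k \<le> 1"
    using assms by (intro s_par_le_1) (simp add: power_le_one)
  then have "0 < 2 * k\<^sup>2 + 2 - s_par k"
    using zero_le_power2[of k] by linarith
  ultimately show ?thesis
    using assms s_par_pos[of k] by simp
qed

lemma omega_par_less:
  assumes "L \<noteq> 0" "0 \<le> a" "a < b" "b < 1"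
  shows "omega_par L a < omega_par L b"
proof -
  have "(ellK a)\<^sup>2 * s_par a < (ellK b)\<^sup>2 * s_par b"
    by (rule ellK_sq_mult_strict_mono[OF has_real_derivative_s_par])
      (use assms s_par_pos s_par_weight_pos in \<open>auto intro: less_imp_le\<close>)
  then show ?thesis
    using assms(1) by (simp add: omega_par_eq divide_strict_right_mono)
qed

lemma omega_par_0: "omega_par L 0 = 4 * pi\<^sup>2 / L\<^sup>2"
  by (simp add: omega_par_eq ellK_0 s_par_0 power_divide)

lemma strict_mono_on_omega_par: "L \<noteq> 0 \<Longrightarrow> strict_mono_on {0<..<1} (omega_par L)"
  by (auto intro!: strict_mono_onI omega_par_less)

lemma omega_par_gt: "L \<noteq> 0 \<Longrightarrow> 0 < k \<Longrightarrow> k < 1 \<Longrightarrow> 4 * pi\<^sup>2 / L\<^sup>2 < omega_par L k"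
  using omega_par_less[of L 0 k] by (simp add: omega_par_0)

lemma has_real_derivative_omega_par:
  assumes "L \<noteq> 0" "\<bar>k\<bar> < 1"
  shows "(omega_par L has_real_derivative
           16 * (2 * ellK k * ellK' k * s_par k + (ellK k)\<^sup>2 * ((2 * k ^ 3 - k) / s_par k)) / L\<^sup>2) (at k)"
  unfolding omega_par_eq[abs_def] using assms
  by (auto intro!: derivative_eq_intros has_real_derivative_ellK has_real_derivative_s_par
      simp: power2_eq_square field_simps)

lemma omega_par_surj:
  assumes L: "L \<noteq> 0" and w: "4 * pi\<^sup>2 / L\<^sup>2 < w"
  shows "\<exists>k. 0 < k \<and> k < 1 \<and> omega_par L k = w"
proof -
  obtain k1 where k1: "0 < k1" "k1 < 1" "sqrt (w * L\<^sup>2 / 8) < ellK k1"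
    using ellK_unbounded by blast
  have "0 < w"
    using w by (smt (verit) divide_nonneg_pos zero_le_power2 L zero_less_power2)
  moreover have "(sqrt (w * L\<^sup>2 / 8))\<^sup>2 < (ellK k1)\<^sup>2"
    using k1(3) \<open>0 < w\<close> by (intro power_strict_mono) auto
  ultimately have "w * L\<^sup>2 / 8 < (ellK k1)\<^sup>2"
    by simp
  then have "w < 8 * (ellK k1)\<^sup>2 / L\<^sup>2"
    using L by (simp add: field_simps)
  also have "\<dots> \<le> omega_par L k1"
  proof -
    have "8 * (ellK k1)\<^sup>2 \<le> 16 * (ellK k1)\<^sup>2 * s_par k1"
      using mult_left_mono[OF s_par_ge_half[of k1], of "16 * (ellK k1)\<^sup>2"] by simp
    then show ?thesis
      by (simp add: omega_par_eq divide_right_mono)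
  qed
  finally have "w < omega_par L k1" .
  moreover have "isCont (omega_par L) k" if "0 \<le> k" "k \<le> k1" for k
    using that k1 L by (intro DERIV_isCont[OF has_real_derivative_omega_par]) auto
  ultimately obtain k where k: "0 \<le> k" "k \<le> k1" "omega_par L k = w"
    using IVT[of "omega_par L" 0 w k1] w k1 by (auto simp: omega_par_0)
  moreover have "k \<noteq> 0"
    using k w by (auto simp: omega_par_0)
  ultimately show ?thesis
    using k1 by (intro exI[of _ k]) auto
qed

lemma bij_betw_omega_par:
  assumes "L \<noteq> 0"
  shows "bij_betw (omega_par L) {0<..<1} {4 * pi\<^sup>2 / L\<^sup>2 <..}"
proof -
  have "{4 * pi\<^sup>2 / L\<^sup>2 <..} \<subseteq> omega_par L ` {0<..<1}"
  proof
    fix w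
    assume "w \<in> {4 * pi\<^sup>2 / L\<^sup>2 <..}"
    with omega_par_surj[OF assms] obtain k where "0 < k" "k < 1" "omega_par L k = w"
      by auto
    then show "w \<in> omega_par L ` {0<..<1}"
      by (auto intro: image_eqI[of _ _ k])
  qed
  then show ?thesis
    unfolding bij_betw_def
    using strict_mono_on_imp_inj_on[OF strict_mono_on_omega_par] omega_par_gt assms by auto
qed

lemma k_of_omega:
  assumes "L \<noteq> 0" "4 * pi\<^sup>2 / L\<^sup>2 < w"
  shows "k_of_omega L w \<in> {0<..<1}" "omega_par L (k_of_omega L w) = w"
proof -
  obtain k where k: "0 < k" "k < 1" "omega_par L k = w"
    using omega_par_surj[OF assms] by blast
  have "\<exists>!k. k \<in> {0<..<1} \<and> omega_par L k = w"
    using k inj_onD[OF strict_mono_on_imp_inj_on[OF strict_mono_on_omega_par[OF assms(1)]]]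
    by (intro ex1I[of _ k]) auto
  from theI'[OF this] show "k_of_omega L w \<in> {0<..<1}" "omega_par L (k_of_omega L w) = w"
    by (simp_all add: k_of_omega_def)
qed

lemma k_of_omega_omega_par:
  assumes "L \<noteq> 0" "0 < k" "k < 1"
  shows "k_of_omega L (omega_par L k) = k"
  using k_of_omega[OF assms(1) omega_par_gt[OF assms]] assms
    strict_mono_on_imp_inj_on[OF strict_mono_on_omega_par[OF assms(1)]]
  by (auto dest: inj_onD)

lemma smooth_on_omega_par: "smooth_on {-1<..<1} (omega_par L)"
proof (rule smooth_onI)
  fix n
  have "Cn_on n {-1<..<1} (\<lambda>k. 16 / L\<^sup>2 * ((ellK k)\<^sup>2 * s_par k))"
    by (intro Cn_on_mult Cn_on_const Cn_on_power smooth_onD[OF smooth_on_ellK] smooth_onD[OF smooth_on_s_par])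
  then show "Cn_on n {-1<..<1} (omega_par L)"
    by (simp add: omega_par_eq[abs_def] mult.assoc)
qed

lemma smooth_on_b_par: "smooth_on {-1<..<1} (b_par L)"
proof (rule smooth_onI)
  fix n
  have "Cn_on n {-1<..<1} (\<lambda>k. 4 / L * ellK k)"
    by (intro Cn_on_mult Cn_on_const smooth_onD[OF smooth_on_ellK])
  then show "Cn_on n {-1<..<1} (b_par L)"
    by (simp add: b_par_def[abs_def])
qed

lemma smooth_on_q_par: "smooth_on S q_par"
  unfolding q_par_def[abs_def]
  by (intro smooth_onI Cn_on_diff Cn_on_power Cn_on_id Cn_on_const smooth_onD[OF smooth_on_s_par])

lemma root_4_eq_sqrt_sqrt: "root 4 x = sqrt (sqrt x)"
  using real_root_mult_exp[of 2 2 x] by (simp add: sqrt_def)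

lemma amplitude_radicand_pos:
  assumes "L \<noteq> 0" "\<bar>k\<bar> < 1"
  shows "0 < (ellK k)\<^sup>2 * (2 + 2 * s_par k - k\<^sup>2) * L\<^sup>2"
proof -
  have "k\<^sup>2 < 1"
    using assms(2) by (simp add: abs_square_less_1)
  then have "0 < 2 + 2 * s_par k - k\<^sup>2"
    using s_par_pos[of k] by linarith
  then show ?thesis
    using assms ellK_pos[OF assms(2)] by simp
qed

lemma smooth_on_a_par:
  assumes "L \<noteq> 0"
  shows "smooth_on {-1<..<1} (a_par L)"
proof (rule smooth_onI)
  fix n
  let ?X = "\<lambda>k. (ellK k)\<^sup>2 * (2 + 2 * s_par k - k\<^sup>2) * L\<^sup>2"
  have pos: "0 < ?X k" if "k \<in> {-1<..<1}" for k
    using that assms by (intro amplitude_radicand_pos) auto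
  have "Cn_on n {-1<..<1} ?X"
    by (intro Cn_on_mult Cn_on_add Cn_on_diff Cn_on_const Cn_on_power Cn_on_id
        smooth_onD[OF smooth_on_ellK] smooth_onD[OF smooth_on_s_par])
  then have "Cn_on n {-1<..<1} (\<lambda>k. sqrt (sqrt (?X k)))"
    using pos by (intro Cn_on_sqrt) auto
  then have "Cn_on n {-1<..<1} (\<lambda>k. 2 / L * sqrt (sqrt (?X k)))"
    by (rule Cn_on_mult[OF Cn_on_const])
  then show "Cn_on n {-1<..<1} (a_par L)"
    by (simp add: a_par_eq[abs_def] root_4_eq_sqrt_sqrt)
qed

lemma a_par_gt:
  assumes L: "0 < L" and k: "0 < k" "k < 1"
  shows "2 * sqrt pi / sqrt L < a_par L k"
proof -
  have "(ellK 0)\<^sup>2 * (2 + 2 * s_par 0 - 0\<^sup>2) < (ellK k)\<^sup>2 * (2 + 2 * s_par k - k\<^sup>2)"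
  proof (rule ellK_sq_mult_strict_mono[where h="\<lambda>k. 2 + 2 * s_par k - k\<^sup>2"])
    show "((\<lambda>k. 2 + 2 * s_par k - k\<^sup>2) has_real_derivative 2 * ((2 * k ^ 3 - k) / s_par k) - 2 * k) (at k)"
      for k
      by (auto intro!: derivative_eq_intros has_real_derivative_s_par)
    show "0 \<le> 2 + 2 * s_par x - x\<^sup>2" if "0 < x" "x < 1" for x
      using that s_par_pos[of x] power_le_one[of x 2] by linarith
  qed (use k amplitude_weight_pos in auto)
  then have "pi\<^sup>2 * L\<^sup>2 < (ellK k)\<^sup>2 * (2 + 2 * s_par k - k\<^sup>2) * L\<^sup>2"
    using L by (simp add: ellK_0 s_par_0 power_divide)
  then have "root 4 (pi\<^sup>2 * L\<^sup>2) < root 4 ((ellK k)\<^sup>2 * (2 + 2 * s_par k - k\<^sup>2) * L\<^sup>2)"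
    by simp
  moreover have "root 4 (pi\<^sup>2 * L\<^sup>2) = sqrt pi * sqrt L"
    using L by (simp add: root_4_eq_sqrt_sqrt real_sqrt_mult)
  ultimately have "2 * (sqrt pi * sqrt L) / L < a_par L k"
    using L by (simp add: a_par_eq divide_strict_right_mono)
  moreover have "2 * (sqrt pi * sqrt L) / L = 2 * sqrt pi / sqrt L"
    using L by (simp add: field_simps)
  ultimately show ?thesis
    by simp
qed

lemma omega_par_deriv_pos:
  assumes "L \<noteq> 0" "0 < k" "k < 1"
  shows "0 < 16 * (2 * ellK k * ellK' k * s_par k + (ellK k)\<^sup>2 * ((2 * k ^ 3 - k) / s_par k)) / L\<^sup>2"
  using ellK_sq_mult_deriv_pos[OF assms(2,3) less_imp_le[OF s_par_pos] s_par_weight_pos[OF assms(2)]] assms(1)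
  by simp

lemma smooth_on_k_of_omega:
  assumes L: "L \<noteq> 0"
  shows "smooth_on {4 * pi\<^sup>2 / L\<^sup>2 <..} (k_of_omega L)"
proof (rule smooth_on_inverse_function[of "{0<..<1}" _ "omega_par L"])
  show "smooth_on {0<..<1} (omega_par L)"
    by (rule smooth_on_subset[OF smooth_on_omega_par]) auto
  show "(omega_par L has_real_derivative
          16 * (2 * ellK k * ellK' k * s_par k + (ellK k)\<^sup>2 * ((2 * k ^ 3 - k) / s_par k)) / L\<^sup>2) (at k)"
    if "k \<in> {0<..<1}" for k
    using that L by (intro has_real_derivative_omega_par) auto
  show "16 * (2 * ellK k * ellK' k * s_par k + (ellK k)\<^sup>2 * ((2 * k ^ 3 - k) / s_par k)) / L\<^sup>2 \<noteq> 0"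
    if "k \<in> {0<..<1}" for k
    using omega_par_deriv_pos[OF L, of k] that by (metis greaterThanLessThan_iff less_irrefl)
qed (use L k_of_omega k_of_omega_omega_par in auto)

section \<open>The cnoidal profile\<close>

lemma jsn_sq_le_1: "(jsn u k)\<^sup>2 \<le> 1"
  using jsn_sq_add_jcn_sq[of u k] zero_le_power2[of "jcn u k"] by linarith

lemma cn_profile_radicand_pos:
  assumes "q < 1"
  shows "0 < 1 - q * (jsn u k)\<^sup>2"
proof (cases "q \<le> 0")
  case True
  then show ?thesis
    using mult_nonpos_nonneg[OF True zero_le_power2[of "jsn u k"]] by simp
next
  case False
  then have "q * (jsn u k)\<^sup>2 \<le> q * 1"
    by (intro mult_left_mono jsn_sq_le_1) simp
  then show ?thesis
    using assms by simp
qed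

lemma has_real_derivative_cn_profile_denominator:
  assumes k: "\<bar>k\<bar> < 1" and q: "q < 1"
  shows "((\<lambda>u. sqrt (1 - q * (jsn u k)\<^sup>2)) has_real_derivative
           - q * jsn u k * jcn u k * jdn u k / sqrt (1 - q * (jsn u k)\<^sup>2)) (at u)"
proof -
  have "((\<lambda>u. 1 - q * (jsn u k)\<^sup>2) has_real_derivative - (q * (2 * jsn u k * (jcn u k * jdn u k)))) (at u)"
    using k by (auto intro!: derivative_eq_intros has_real_derivative_jsn)
  from DERIV_chain2[OF DERIV_real_sqrt[OF cn_profile_radicand_pos[OF q]] this]
  show ?thesis
    using cn_profile_radicand_pos[OF q, of u k] by (simp add: field_simps)
qed

lemma has_real_derivative_cn_profile:
  assumes k: "\<bar>k\<bar> < 1" and q: "q < 1"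
  shows "((\<lambda>u. a * jcn u k / sqrt (1 - q * (jsn u k)\<^sup>2)) has_real_derivative
           a * (q - 1) * jsn u k * jdn u k / sqrt (1 - q * (jsn u k)\<^sup>2) ^ 3) (at u)"
proof -
  have simplify: "(a * (- S * D * 1) * P - a * C * (- q * S * C * D / P)) / (P * P)
      = a * (q - 1) * S * D / P ^ 3"
    if "0 < P" "P\<^sup>2 = 1 - q * S\<^sup>2" "C\<^sup>2 = 1 - S\<^sup>2" for S C D P :: real
  proof -
    have "(a * (- S * D * 1) * P - a * C * (- q * S * C * D / P)) / (P * P)
        = a * S * D * (q * C\<^sup>2 - P\<^sup>2) / P ^ 3"
      using that(1) by (simp add: field_simps power2_eq_square power3_eq_cube)
    also have "q * C\<^sup>2 - P\<^sup>2 = q - 1"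
      unfolding that(2,3) by (simp add: algebra_simps)
    finally show ?thesis
      by (simp add: mult_ac)
  qed
  show ?thesis
    using cn_profile_radicand_pos[OF q, of u k] jsn_sq_add_jcn_sq[of u k]
    by (intro DERIV_cong[OF DERIV_divide[OF DERIV_cmult[OF has_real_derivative_jcn[OF k DERIV_ident]]
          has_real_derivative_cn_profile_denominator[OF k q]] simplify]) (simp_all add: algebra_simps)
qed

lemma has_real_derivative_cn_profile_deriv:
  assumes k: "\<bar>k\<bar> < 1" and q: "q < 1"
  shows "((\<lambda>u. a * (q - 1) * jsn u k * jdn u k / sqrt (1 - q * (jsn u k)\<^sup>2) ^ 3) has_real_derivative
           a * (q - 1) * jcn u k * (1 + (2 * q - 2 * k\<^sup>2) * (jsn u k)\<^sup>2 - q * k\<^sup>2 * (jsn u k) ^ 4)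
             / sqrt (1 - q * (jsn u k)\<^sup>2) ^ 5) (at u)"
proof -
  have simplify: "(((a * (q - 1) * (C * D * 1)) * D + (- k\<^sup>2 * S * C * 1) * (a * (q - 1) * S)) * P ^ 3
        - a * (q - 1) * S * D * (of_nat 3 * ((- q * S * C * D / P) * P ^ (3 - Suc 0))))
        / (P ^ 3 * P ^ 3)
      = a * (q - 1) * C * (1 + (2 * q - 2 * k\<^sup>2) * S\<^sup>2 - q * k\<^sup>2 * S ^ 4) / P ^ 5"
    if "0 < P" "P\<^sup>2 = 1 - q * S\<^sup>2" "D\<^sup>2 = 1 - k\<^sup>2 * S\<^sup>2" for S C D P :: real
  proof -
    have "(((a * (q - 1) * (C * D * 1)) * D + (- k\<^sup>2 * S * C * 1) * (a * (q - 1) * S)) * P ^ 3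
          - a * (q - 1) * S * D * (of_nat 3 * ((- q * S * C * D / P) * P ^ (3 - Suc 0))))
          / (P ^ 3 * P ^ 3)
        = a * (q - 1) * C * ((D\<^sup>2 - k\<^sup>2 * S\<^sup>2) * P\<^sup>2 + 3 * q * S\<^sup>2 * D\<^sup>2) / P ^ 5"
      using that(1) by (simp add: field_simps power2_eq_square power3_eq_cube eval_nat_numeral)
    also have "(D\<^sup>2 - k\<^sup>2 * S\<^sup>2) * P\<^sup>2 + 3 * q * S\<^sup>2 * D\<^sup>2 = 1 + (2 * q - 2 * k\<^sup>2) * S\<^sup>2 - q * k\<^sup>2 * S ^ 4"
      unfolding that(2,3) by (simp add: algebra_simps power2_eq_square power4_eq_xxxx)
    finally show ?thesis .
  qed
  show ?thesis
    using cn_profile_radicand_pos[OF q, of u k] jdn_sq[OF k, of u]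
    by (intro DERIV_cong[OF DERIV_divide[OF
          DERIV_mult[OF DERIV_cmult[OF has_real_derivative_jsn[OF k DERIV_ident]] has_real_derivative_jdn[OF k DERIV_ident]]
          DERIV_power[OF has_real_derivative_cn_profile_denominator[OF k q]]] simplify]) simp_all
qed

text \<open>The coefficients of \<open>1\<close>, \<open>sn\<^sup>2\<close> and \<open>sn\<^sup>4\<close> in the numerator of
  \<open>- \<phi>'' + w \<phi> - \<phi>\<^sup>5\<close> vanish exactly under the three hypotheses on \<open>a\<^sup>4\<close>.\<close>

lemma cn_profile_identity:
  fixes a b q k w S C P :: real
  assumes coeffs: "a ^ 4 = w - b\<^sup>2 * (q - 1)" "a ^ 4 = b\<^sup>2 * (q - 1) * (q - k\<^sup>2) + w * q"
      "a ^ 4 = b\<^sup>2 * (q - 1) * q * k\<^sup>2 + w * q\<^sup>2"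
    and P: "0 < P" "P\<^sup>2 = 1 - q * S\<^sup>2" and C: "C\<^sup>2 = 1 - S\<^sup>2"
  shows "- (a * (q - 1) * C * (1 + (2 * q - 2 * k\<^sup>2) * S\<^sup>2 - q * k\<^sup>2 * S ^ 4) / P ^ 5 * b\<^sup>2)
      + w * (a * C / P) - (a * C / P) ^ 5 = 0"
proof -
  have "- (a * (q - 1) * C * (1 + (2 * q - 2 * k\<^sup>2) * S\<^sup>2 - q * k\<^sup>2 * S ^ 4) / P ^ 5 * b\<^sup>2)
      + w * (a * C / P) - (a * C / P) ^ 5
    = a * C / P ^ 5 * (- b\<^sup>2 * (q - 1) * (1 + (2 * q - 2 * k\<^sup>2) * S\<^sup>2 - q * k\<^sup>2 * S ^ 4)
        + w * (P\<^sup>2)\<^sup>2 - a ^ 4 * (C\<^sup>2)\<^sup>2)"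
    using P(1) by (simp add: field_simps power2_eq_square power4_eq_xxxx eval_nat_numeral)
  also have "- b\<^sup>2 * (q - 1) * (1 + (2 * q - 2 * k\<^sup>2) * S\<^sup>2 - q * k\<^sup>2 * S ^ 4)
      + w * (P\<^sup>2)\<^sup>2 - a ^ 4 * (C\<^sup>2)\<^sup>2 = 0"
    unfolding P(2) C using coeffs by algebra
  finally show ?thesis
    by simp
qed

lemma cn_profile_ode:
  fixes a b q k w :: real
  assumes k: "\<bar>k\<bar> < 1" and q: "q < 1"
    and coeffs: "a ^ 4 = w - b\<^sup>2 * (q - 1)" "a ^ 4 = b\<^sup>2 * (q - 1) * (q - k\<^sup>2) + w * q"
      "a ^ 4 = b\<^sup>2 * (q - 1) * q * k\<^sup>2 + w * q\<^sup>2"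
    and \<phi>: "\<And>x. \<phi> x = a * jcn (b * x) k / sqrt (1 - q * (jsn (b * x) k)\<^sup>2)"
  shows "- deriv (deriv \<phi>) x + w * \<phi> x - \<phi> x ^ 5 = 0"
proof -
  define P where "P u = sqrt (1 - q * (jsn u k)\<^sup>2)" for u
  define Q where "Q u = 1 + (2 * q - 2 * k\<^sup>2) * (jsn u k)\<^sup>2 - q * k\<^sup>2 * (jsn u k) ^ 4" for u
  have "(\<phi> has_real_derivative a * (q - 1) * jsn (b * y) k * jdn (b * y) k / P (b * y) ^ 3 * (b * 1)) (at y)" for y
    unfolding \<phi>[abs_def] P_def
    by (rule DERIV_chain2[OF has_real_derivative_cn_profile[OF k q] DERIV_cmult[OF DERIV_ident]])
  then have "deriv \<phi> = (\<lambda>y. a * (q - 1) * jsn (b * y) k * jdn (b * y) k / P (b * y) ^ 3 * (b * 1))"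
    by (simp add: fun_eq_iff DERIV_imp_deriv)
  moreover have "((\<lambda>y. a * (q - 1) * jsn (b * y) k * jdn (b * y) k / P (b * y) ^ 3 * (b * 1))
      has_real_derivative a * (q - 1) * jcn (b * x) k * Q (b * x) / P (b * x) ^ 5 * (b * 1) * (b * 1)) (at x)"
    unfolding P_def Q_def
    by (rule DERIV_cmult_right[OF DERIV_chain2[OF has_real_derivative_cn_profile_deriv[OF k q]
          DERIV_cmult[OF DERIV_ident]]])
  ultimately have d2: "deriv (deriv \<phi>) x = a * (q - 1) * jcn (b * x) k * Q (b * x) / P (b * x) ^ 5 * b\<^sup>2"
    by (simp add: DERIV_imp_deriv power2_eq_square)
  have "\<phi> x = a * jcn (b * x) k / P (b * x)"
    by (simp add: \<phi> P_def)
  moreover have "0 < P (b * x)" "(P (b * x))\<^sup>2 = 1 - q * (jsn (b * x) k)\<^sup>2"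
    using cn_profile_radicand_pos[OF q, of "b * x" k] by (simp_all add: P_def)
  moreover have "(jcn (b * x) k)\<^sup>2 = 1 - (jsn (b * x) k)\<^sup>2"
    using jsn_sq_add_jcn_sq[of "b * x" k] by simp
  ultimately show ?thesis
    unfolding d2 Q_def by (simp only: cn_profile_identity[OF coeffs])
qed

lemma a_par_pow_4:
  assumes "L \<noteq> 0" "\<bar>k\<bar> < 1"
  shows "a_par L k ^ 4 = 16 * (ellK k)\<^sup>2 * (2 + 2 * s_par k - k\<^sup>2) / L\<^sup>2"
proof -
  let ?X = "(ellK k)\<^sup>2 * (2 + 2 * s_par k - k\<^sup>2) * L\<^sup>2"
  have "a_par L k ^ 4 = 16 * root 4 ?X ^ 4 / L ^ 4"
    by (simp add: a_par_eq power_divide power_mult_distrib)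
  also have "root 4 ?X ^ 4 = ?X"
    using amplitude_radicand_pos[OF assms] by simp
  also have "16 * ?X / L ^ 4 = (16 * (ellK k)\<^sup>2 * (2 + 2 * s_par k - k\<^sup>2) * L\<^sup>2) / (L\<^sup>2 * L\<^sup>2)"
    by (simp add: power4_eq_xxxx power2_eq_square mult_ac)
  also have "\<dots> = 16 * (ellK k)\<^sup>2 * (2 + 2 * s_par k - k\<^sup>2) / L\<^sup>2"
    using assms(1) by (rule nonzero_mult_divide_mult_cancel_right[OF power_not_zero])
  finally show ?thesis .
qed

lemma wave_coefficients:
  assumes "L \<noteq> 0" "\<bar>k\<bar> < 1"
  defines "a \<equiv> a_par L k" and "b \<equiv> b_par L k" and "q \<equiv> q_par k" and "w \<equiv> omega_par L k"
  shows "a ^ 4 = w - b\<^sup>2 * (q - 1)" "a ^ 4 = b\<^sup>2 * (q - 1) * (q - k\<^sup>2) + w * q"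
    "a ^ 4 = b\<^sup>2 * (q - 1) * q * k\<^sup>2 + w * q\<^sup>2"
proof -
  define M where "M = 16 * (ellK k)\<^sup>2 / L\<^sup>2"
  have M: "a ^ 4 = M * (2 + 2 * s_par k - k\<^sup>2)" "b\<^sup>2 = M" "w = M * s_par k"
    using a_par_pow_4[OF assms(1,2)]
    by (simp_all add: M_def a_def b_def w_def b_par_def omega_par_eq power_divide)
  show "a ^ 4 = w - b\<^sup>2 * (q - 1)" "a ^ 4 = b\<^sup>2 * (q - 1) * (q - k\<^sup>2) + w * q"
    "a ^ 4 = b\<^sup>2 * (q - 1) * q * k\<^sup>2 + w * q\<^sup>2"
    unfolding M q_def q_par_def using s_par_sq[of k] by algebra+
qed

lemma phi_k_ode:
  assumes "L \<noteq> 0" "\<bar>k\<bar> < 1"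
  shows "- deriv (deriv (phi_k L k)) x + omega_par L k * phi_k L k x - phi_k L k x ^ 5 = 0"
  using wave_coefficients[OF assms] q_par_neg[of k]
  by (intro cn_profile_ode[OF assms(2)]) (simp_all add: phi_k_def)

lemma phi_k_minus: "\<bar>k\<bar> < 1 \<Longrightarrow> phi_k L k (- x) = phi_k L k x"
  by (simp add: phi_k_def jsn_minus jcn_minus)

lemma phi_k_add_period:
  assumes "L \<noteq> 0" "\<bar>k\<bar> < 1"
  shows "phi_k L k (x + L) = phi_k L k x"
proof -
  have "b_par L k * (x + L) = b_par L k * x + 4 * ellK k"
    using assms(1) by (simp add: b_par_def field_simps)
  then show ?thesis
    by (simp add: phi_k_def jsn_add_4ellK[OF assms(2)] jcn_add_4ellK[OF assms(2)])
qed

lemma smooth_on_phi_k: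
  assumes L: "L \<noteq> 0"
  shows "smooth_on ({-1<..<1} \<times> UNIV) (\<lambda>z. phi_k L (fst z) (snd z))"
proof (rule smooth_onI)
  fix n
  let ?V = "{-1<..<1} \<times> UNIV :: (real \<times> real) set"
  have V: "open ?V"
    by (intro open_Times) auto
  have par: "Cn_on n ?V (\<lambda>z. f (fst z))" if "smooth_on {-1<..<1} f" for f :: "real \<Rightarrow> real"
    using Cn_on_compose[OF V smooth_onD[OF that] Cn_on_fst] by (auto simp: mem_Times_iff)
  have "Cn_on n ?V (\<lambda>z. jam (b_par L (fst z) * snd z) (fst z))"
    using Cn_on_compose[OF V smooth_onD[OF smooth_on_jam]
        Cn_on_Pair[OF Cn_on_mult[OF par[OF smooth_on_b_par] Cn_on_snd] Cn_on_fst]]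
    by (auto simp: mem_Times_iff)
  from Cn_on_sin[OF V this] Cn_on_cos[OF V this]
  have J: "Cn_on n ?V (\<lambda>z. jsn (b_par L (fst z) * snd z) (fst z))"
      "Cn_on n ?V (\<lambda>z. jcn (b_par L (fst z) * snd z) (fst z))"
    by (simp_all add: jsn_def jcn_def)
  have pos: "0 < 1 - q_par (fst z) * (jsn (b_par L (fst z) * snd z) (fst z))\<^sup>2" for z
    using cn_profile_radicand_pos q_par_neg by (metis less_trans zero_less_one)
  have "Cn_on n ?V (\<lambda>z. a_par L (fst z) * jcn (b_par L (fst z) * snd z) (fst z)
      / sqrt (1 - q_par (fst z) * (jsn (b_par L (fst z) * snd z) (fst z))\<^sup>2))"
    using pos
    by (intro Cn_on_divide Cn_on_mult Cn_on_sqrt Cn_on_diff Cn_on_power Cn_on_const J V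
        par[OF smooth_on_a_par[OF L]] par[OF smooth_on_subset[OF smooth_on_q_par]]) (auto simp: less_imp_neq[symmetric])
  then show "Cn_on n ?V (\<lambda>z. phi_k L (fst z) (snd z))"
    by (simp add: phi_k_def)
qed

lemma smooth_on_phi_k_profile:
  assumes "L \<noteq> 0" "\<bar>k\<bar> < 1"
  shows "smooth_on UNIV (phi_k L k)"
proof (rule smooth_onI)
  fix n
  have "Cn_on n UNIV (\<lambda>x. phi_k L (fst (k, x)) (snd (k, x)))"
    by (rule Cn_on_compose[OF open_UNIV smooth_onD[OF smooth_on_phi_k[OF assms(1)]]
          Cn_on_Pair[OF Cn_on_const Cn_on_id]]) (use assms(2) in \<open>auto simp: abs_less_iff\<close>)
  then show "Cn_on n UNIV (phi_k L k)"
    by simp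
qed

lemma smooth_on_phi_omega:
  assumes L: "L \<noteq> 0"
  shows "smooth_on ({4 * pi\<^sup>2 / L\<^sup>2 <..} \<times> UNIV) (\<lambda>(w, x). phi_omega L w x)"
proof (rule smooth_onI)
  fix n
  let ?W = "{4 * pi\<^sup>2 / L\<^sup>2 <..} \<times> UNIV :: (real \<times> real) set"
  have W: "open ?W"
    by (intro open_Times) auto
  have "Cn_on n ?W (\<lambda>z. k_of_omega L (fst z))"
    using Cn_on_compose[OF W smooth_onD[OF smooth_on_k_of_omega[OF L]] Cn_on_fst]
    by (auto simp: mem_Times_iff)
  moreover have "k_of_omega L w \<in> {-1<..<1}" if "4 * pi\<^sup>2 / L\<^sup>2 < w" for w
    using k_of_omega(1)[OF L that] by auto
  ultimately have "Cn_on n ?W (\<lambda>z. phi_k L (fst (k_of_omega L (fst z), snd z)) (snd (k_of_omega L (fst z), snd z)))"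
    by (intro Cn_on_compose[OF W smooth_onD[OF smooth_on_phi_k[OF L]] Cn_on_Pair[OF _ Cn_on_snd]])
      (auto simp: mem_Times_iff)
  then show "Cn_on n ?W (\<lambda>(w, x). phi_omega L w x)"
    by (simp add: phi_omega_def split_beta')
qed

theorem theorem3p2:
  fixes L :: real
  assumes L: "L > 0"
  shows
    "(\<forall>k\<in>{0<..<1}.
        smooth_on UNIV (phi_k L k)
      \<and> (\<forall>x. phi_k L k (- x) = phi_k L k x)
      \<and> (\<forall>x. phi_k L k (x + L) = phi_k L k x)
      \<and> (\<forall>x. - deriv (deriv (phi_k L k)) x + omega_par L k * phi_k L k x
               - (phi_k L k x) ^ 5 = 0))
   \<and> (\<forall>k\<in>{0<..<1}. a_par L k \<in> {2 * sqrt pi / sqrt L <..} \<and> q_par k \<in> {-2<..<-1})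
   \<and> smooth_on {0<..<1} (a_par L) \<and> smooth_on {0<..<1} q_par \<and> smooth_on {0<..<1} (b_par L)
   \<and> smooth_on {0<..<1} (omega_par L)
   \<and> strict_mono_on {0<..<1} (omega_par L)
   \<and> bij_betw (omega_par L) {0<..<1} {4 * pi\<^sup>2 / L\<^sup>2 <..}
   \<and> smooth_on ({4 * pi\<^sup>2 / L\<^sup>2 <..} \<times> UNIV) (\<lambda>(w, x). phi_omega L w x)"
proof -
  have L0: "L \<noteq> 0"
    using L by simp
  have waves: "smooth_on UNIV (phi_k L k) \<and> (\<forall>x. phi_k L k (- x) = phi_k L k x)
      \<and> (\<forall>x. phi_k L k (x + L) = phi_k L k x)
      \<and> (\<forall>x. - deriv (deriv (phi_k L k)) x + omega_par L k * phi_k L k x - (phi_k L k x) ^ 5 = 0)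
      \<and> a_par L k \<in> {2 * sqrt pi / sqrt L <..} \<and> q_par k \<in> {-2<..<-1}"
    if "k \<in> {0<..<1}" for k
  proof -
    have k: "\<bar>k\<bar> < 1" "0 < k" "k < 1"
      using that by auto
    show ?thesis
      using smooth_on_phi_k_profile[OF L0 k(1)] phi_k_minus[OF k(1)] phi_k_add_period[OF L0 k(1)]
        phi_k_ode[OF L0 k(1)] a_par_gt[OF L k(2,3)] q_par_bounds[OF k(2,3)] by simp
  qed
  have "{0<..<1} \<subseteq> {-1<..<1::real}"
    by auto
  with waves show ?thesis
    using smooth_on_subset[OF smooth_on_a_par[OF L0]] smooth_on_q_par
      smooth_on_subset[OF smooth_on_b_par] smooth_on_subset[OF smooth_on_omega_par]
      strict_mono_on_omega_par[OF L0] bij_betw_omega_par[OF L0] smooth_on_phi_omega[OF L0]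
    by blast
qed

end
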